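(* Let $(\mathcal B,T,\langle\!\langle-\rangle\!\rangle,\theta)$ be a bicategory with shadow. Let $\mathcal D$ be a diagram in the shadow category $\mathrm{Sh}(U\mathcal B)$ of the free shadowed bicategory on the underlying graph of $\mathcal B$, such that any two parallel composites in $\mathcal D$ have the same underlying cyclic permutation. Then the image of $\mathcal D$ in $T$ under the counit commutes. In particular, if the edges $X_1,\dots,X_n$ involved form an aperiodic list, every formal diagram in $T$ on them commutes.
   Context: A shadow on a bicategory $\mathcal B$ consists of a category $T$, functors $\langle\!\langle-\rangle\!\rangle:\mathcal B(A,A)\to T$ for each 0-cell $A$, and natural isomorphisms $\theta:\langle\!\langle M\odot N\rangle\!\rangle\cong\langle\!\langle N\odot M\rangle\!\rangle$ for $M\in\mathcal B(A,B)$, $N\in\mathcal B(B,A)$, such that $\theta\circ\theta=\mathrm{id}$, $\ell\circ\theta=r$ as maps $\langle\!\langle X\odot I\rangle\!\rangle\to\langle\!\langle X\rangle\!\rangle$, and $\theta\circ\alpha\circ\theta=\alpha\circ\theta\circ\alpha$ as maps $\langle\!\langle (X\odot Y)\odot Z\rangle\!\rangle\to\langle\!\langle Y\odot(Z\odot X)\rangle\!\rangle$ (i.e. $\langle\!\langle (X\odot Y)\odot Z\rangle\!\rangle\xrightarrow{\theta}\langle\!\langle Z\odot(X\odot Y)\rangle\!\rangle\xrightarrow{\alpha}\langle\!\langle (Z\odot X)\odot Y\rangle\!\rangle\xrightarrow{\theta}\langle\!\langle Y\odot(Z\odot X)\rangle\!\rangle$ equals $\langle\!\langle (X\odot Y)\odot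 Z\rangle\!\rangle\xrightarrow{\alpha}\langle\!\langle X\odot(Y\odot Z)\rangle\!\rangle\xrightarrow{\theta}\langle\!\langle (Y\odot Z)\odot X\rangle\!\rangle\xrightarrow{\alpha}\langle\!\langle Y\odot(Z\odot X)\rangle\!\rangle$). Strict maps of shadowed bicategories are strict functors with a functor of shadow categories strictly commuting with all structure. The forgetful functor to directed graphs takes the underlying graph $U\mathcal B$ (0-cells and 1-cells). Its left adjoint sends a graph $G$ to $(\mathcal F(G),\mathrm{Sh}(G))$, where $\mathcal F(G)$ is the free bicategory on $G$ (1-cells: parenthesized composable words in edges and formal units; 2-cells: generated by whiskered associators/unitors modulo the bicategory axioms), and $\mathrm{Sh}(G)$ has objects $\langle\!\langle w\rangle\!\rangle$ for $w$ an endomorphism 1-cell of $\mathcal F(G)$, morphisms generated by whiskered associators/unitors inside $w$ and rotators $\theta:\langle\!\langle A\odot B\rangle\!\rangle\cong\langle\!\langle B\odot A\rangle\!\rangle$ applied to the outermost product, modulo the bicategory relations, the shadow axioms and naturality of $\theta$. A morphism of $\mathrm{Sh}(G)$ induces a bijection between the edge occurrences (letters) of source and target, which is a cyclic permutation ($\theta$ rotates; other generators preserve order); this is its underlying cyclic permutation. A formal diagram in $T$ is the image of a diagram in $\mathrm{Sh}(U\mathcal B)$ under the counit. A list $X_1,\dots,X_n$ of edges is aperiodic if no nontrivial cyclic rotation of the list returns the same list. *)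

theory Defs
  imports Main
begin

text \<open>0-cells of type 'o, 1-cells of type 'a, 2-cells of type 'b.
  A 1-cell M lies in B(s1 M, t1 M).  hc M N = M \<odot> N is defined when t1 M = s1 N.
  A 2-cell f goes from d2 f to c2 f; vc g f is g after f; hc2 is horizontal composition.
  asc M N P : (M \<odot> N) \<odot> P \<Rightarrow> M \<odot> (N \<odot> P); lu M : I \<odot> M \<Rightarrow> M; ru M : M \<odot> I \<Rightarrow> M.\<close>

record ('o,'a,'b) bicat =
  s1 :: "'a \<Rightarrow> 'o"
  t1 :: "'a \<Rightarrow> 'o"
  d2 :: "'b \<Rightarrow> 'a"
  c2 :: "'b \<Rightarrow> 'a"
  vc :: "'b \<Rightarrow> 'b \<Rightarrow> 'b"
  i2 :: "'a \<Rightarrow> 'b"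
  hc :: "'a \<Rightarrow> 'a \<Rightarrow> 'a"
  hc2 :: "'b \<Rightarrow> 'b \<Rightarrow> 'b"
  un :: "'o \<Rightarrow> 'a"
  asc :: "'a \<Rightarrow> 'a \<Rightarrow> 'a \<Rightarrow> 'b"
  lu :: "'a \<Rightarrow> 'b"
  ru :: "'a \<Rightarrow> 'b"

definition is_inverse2 :: "('o,'a,'b) bicat \<Rightarrow> 'b \<Rightarrow> 'b \<Rightarrow> bool" where
  "is_inverse2 B f g \<longleftrightarrow> d2 B g = c2 B f \<and> c2 B g = d2 B f \<and>
     vc B g f = i2 B (d2 B f) \<and> vc B f g = i2 B (c2 B f)"

definition iso2 :: "('o,'a,'b) bicat \<Rightarrow> 'b \<Rightarrow> bool" where
  "iso2 B f \<longleftrightarrow> (\<exists>g. is_inverse2 B f g)"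

definition inv2 :: "('o,'a,'b) bicat \<Rightarrow> 'b \<Rightarrow> 'b" where
  "inv2 B f = (THE g. is_inverse2 B f g)"

definition is_bicat :: "('o,'a,'b) bicat \<Rightarrow> bool" where
  "is_bicat B \<longleftrightarrow>
    (\<forall>M N. t1 B M = s1 B N \<longrightarrow> s1 B (hc B M N) = s1 B M \<and> t1 B (hc B M N) = t1 B N) \<and>
    (\<forall>A. s1 B (un B A) = A \<and> t1 B (un B A) = A) \<and>
    (\<forall>f. s1 B (d2 B f) = s1 B (c2 B f) \<and> t1 B (d2 B f) = t1 B (c2 B f)) \<and>
    (\<forall>M. d2 B (i2 B M) = M \<and> c2 B (i2 B M) = M) \<and>
    (\<forall>f g. c2 B f = d2 B g \<longrightarrow> d2 B (vc B g f) = d2 B f \<and> c2 B (vc B g f) = c2 B g) \<and>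
    (\<forall>f g h. c2 B f = d2 B g \<and> c2 B g = d2 B h \<longrightarrow> vc B h (vc B g f) = vc B (vc B h g) f) \<and>
    (\<forall>f. vc B f (i2 B (d2 B f)) = f \<and> vc B (i2 B (c2 B f)) f = f) \<and>
    (\<forall>f g. t1 B (d2 B f) = s1 B (d2 B g) \<longrightarrow>
        d2 B (hc2 B f g) = hc B (d2 B f) (d2 B g) \<and> c2 B (hc2 B f g) = hc B (c2 B f) (c2 B g)) \<and>
    (\<forall>M N. t1 B M = s1 B N \<longrightarrow> hc2 B (i2 B M) (i2 B N) = i2 B (hc B M N)) \<and>
    (\<forall>f f' g g'. c2 B f = d2 B f' \<and> c2 B g = d2 B g' \<and> t1 B (d2 B f) = s1 B (d2 B g) \<longrightarrow>
        hc2 B (vc B f' f) (vc B g' g) = vc B (hc2 B f' g') (hc2 B f g)) \<and>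
    (\<forall>M N P. t1 B M = s1 B N \<and> t1 B N = s1 B P \<longrightarrow>
        d2 B (asc B M N P) = hc B (hc B M N) P \<and> c2 B (asc B M N P) = hc B M (hc B N P) \<and>
        iso2 B (asc B M N P)) \<and>
    (\<forall>f g h. t1 B (d2 B f) = s1 B (d2 B g) \<and> t1 B (d2 B g) = s1 B (d2 B h) \<longrightarrow>
        vc B (asc B (c2 B f) (c2 B g) (c2 B h)) (hc2 B (hc2 B f g) h) =
        vc B (hc2 B f (hc2 B g h)) (asc B (d2 B f) (d2 B g) (d2 B h))) \<and>
    (\<forall>M. d2 B (lu B M) = hc B (un B (s1 B M)) M \<and> c2 B (lu B M) = M \<and> iso2 B (lu B M)) \<and>
    (\<forall>f. vc B (lu B (c2 B f)) (hc2 B (i2 B (un B (s1 B (d2 B f)))) f) = vc B f (lu B (d2 B f))) \<and>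
    (\<forall>M. d2 B (ru B M) = hc B M (un B (t1 B M)) \<and> c2 B (ru B M) = M \<and> iso2 B (ru B M)) \<and>
    (\<forall>f. vc B (ru B (c2 B f)) (hc2 B f (i2 B (un B (t1 B (d2 B f))))) = vc B f (ru B (d2 B f))) \<and>
    (\<forall>M N P Q. t1 B M = s1 B N \<and> t1 B N = s1 B P \<and> t1 B P = s1 B Q \<longrightarrow>
        vc B (asc B M N (hc B P Q)) (asc B (hc B M N) P Q) =
        vc B (hc2 B (i2 B M) (asc B N P Q))
             (vc B (asc B M (hc B N P) Q) (hc2 B (asc B M N P) (i2 B Q)))) \<and>
    (\<forall>M N. t1 B M = s1 B N \<longrightarrow>
        vc B (hc2 B (i2 B M) (lu B N)) (asc B M (un B (t1 B M)) N) = hc2 B (ru B M) (i2 B N))"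

text \<open>The shadow category T: objects 't, morphisms 'm, Tcomp g f = g after f.
  shO / shM: the shadow functors on endo-1-cells / 2-cells between endo-1-cells.
  rot M N : shadow of M \<odot> N to shadow of N \<odot> M (the isomorphism theta).\<close>

record ('a,'b,'t,'m) shadow =
  Td :: "'m \<Rightarrow> 't"
  Tc :: "'m \<Rightarrow> 't"
  Tcomp :: "'m \<Rightarrow> 'm \<Rightarrow> 'm"
  Tid :: "'t \<Rightarrow> 'm"
  shO :: "'a \<Rightarrow> 't"
  shM :: "'b \<Rightarrow> 'm"
  rot :: "'a \<Rightarrow> 'a \<Rightarrow> 'm"

definition is_shadow :: "('o,'a,'b) bicat \<Rightarrow> ('a,'b,'t,'m) shadow \<Rightarrow> bool" where
  "is_shadow B S \<longleftrightarrow>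
    (\<forall>x. Td S (Tid S x) = x \<and> Tc S (Tid S x) = x) \<and>
    (\<forall>f g. Tc S f = Td S g \<longrightarrow> Td S (Tcomp S g f) = Td S f \<and> Tc S (Tcomp S g f) = Tc S g) \<and>
    (\<forall>f g h. Tc S f = Td S g \<and> Tc S g = Td S h \<longrightarrow>
        Tcomp S h (Tcomp S g f) = Tcomp S (Tcomp S h g) f) \<and>
    (\<forall>f. Tcomp S f (Tid S (Td S f)) = f \<and> Tcomp S (Tid S (Tc S f)) f = f) \<and>
    (\<forall>f. s1 B (d2 B f) = t1 B (d2 B f) \<longrightarrow>
        Td S (shM S f) = shO S (d2 B f) \<and> Tc S (shM S f) = shO S (c2 B f)) \<and>
    (\<forall>M. s1 B M = t1 B M \<longrightarrow> shM S (i2 B M) = Tid S (shO S M)) \<and>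
    (\<forall>f g. s1 B (d2 B f) = t1 B (d2 B f) \<and> c2 B f = d2 B g \<longrightarrow>
        shM S (vc B g f) = Tcomp S (shM S g) (shM S f)) \<and>
    (\<forall>M N. t1 B M = s1 B N \<and> t1 B N = s1 B M \<longrightarrow>
        Td S (rot S M N) = shO S (hc B M N) \<and> Tc S (rot S M N) = shO S (hc B N M) \<and>
        Tcomp S (rot S N M) (rot S M N) = Tid S (shO S (hc B M N))) \<and>
    (\<forall>f g. t1 B (d2 B f) = s1 B (d2 B g) \<and> t1 B (d2 B g) = s1 B (d2 B f) \<longrightarrow>
        Tcomp S (rot S (c2 B f) (c2 B g)) (shM S (hc2 B f g)) =
        Tcomp S (shM S (hc2 B g f)) (rot S (d2 B f) (d2 B g))) \<and>
    (\<forall>X. s1 B X = t1 B X \<longrightarrow>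
        Tcomp S (shM S (lu B X)) (rot S X (un B (t1 B X))) = shM S (ru B X)) \<and>
    (\<forall>X Y Z. t1 B X = s1 B Y \<and> t1 B Y = s1 B Z \<and> t1 B Z = s1 B X \<longrightarrow>
        Tcomp S (rot S (hc B Z X) Y)
          (Tcomp S (shM S (inv2 B (asc B Z X Y))) (rot S (hc B X Y) Z)) =
        Tcomp S (shM S (asc B Y Z X))
          (Tcomp S (rot S X (hc B Y Z)) (shM S (asc B X Y Z))))"

definition is_shadowed_bicat :: "('o,'a,'b) bicat \<Rightarrow> ('a,'b,'t,'m) shadow \<Rightarrow> bool" where
  "is_shadowed_bicat B S \<longleftrightarrow> is_bicat B \<and> is_shadow B S"

text \<open>The underlying graph U B has vertices the 0-cells and edges the 1-cells M (from s1 M to t1 M).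
  1-cells of the free bicategory: parenthesized composable words in edges and formal units.\<close>

datatype ('o,'a) fword = FE 'a | FU 'o | FC "('o,'a) fword" "('o,'a) fword"

fun wsrc :: "('o,'a,'b) bicat \<Rightarrow> ('o,'a) fword \<Rightarrow> 'o" where
  "wsrc B (FE e) = s1 B e"
| "wsrc B (FU A) = A"
| "wsrc B (FC u v) = wsrc B u"

fun wtgt :: "('o,'a,'b) bicat \<Rightarrow> ('o,'a) fword \<Rightarrow> 'o" where
  "wtgt B (FE e) = t1 B e"
| "wtgt B (FU A) = A"
| "wtgt B (FC u v) = wtgt B v"

fun wfw :: "('o,'a,'b) bicat \<Rightarrow> ('o,'a) fword \<Rightarrow> bool" where
  "wfw B (FE e) = True"
| "wfw B (FU A) = True"
| "wfw B (FC u v) = (wfw B u \<and> wfw B v \<and> wtgt B u = wsrc B v)"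

fun letters :: "('o,'a) fword \<Rightarrow> 'a list" where
  "letters (FE e) = [e]"
| "letters (FU A) = []"
| "letters (FC u v) = letters u @ letters v"

text \<open>2-cell expressions of the free bicategory: generated by associators, unitors,
  their inverses and identities under horizontal and vertical composition
  (F2V g f is g after f).\<close>

datatype ('o,'a) f2cell =
    F2Id "('o,'a) fword"
  | F2As "('o,'a) fword" "('o,'a) fword" "('o,'a) fword"
  | F2AsI "('o,'a) fword" "('o,'a) fword" "('o,'a) fword"
  | F2Lu "('o,'a) fword" | F2LuI "('o,'a) fword"
  | F2Ru "('o,'a) fword" | F2RuI "('o,'a) fword"
  | F2H "('o,'a) f2cell" "('o,'a) f2cell"
  | F2V "('o,'a) f2cell" "('o,'a) f2cell"

fun fdom :: "('o,'a,'b) bicat \<Rightarrow> ('o,'a) f2cell \<Rightarrow> ('o,'a) fword"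
and fcod :: "('o,'a,'b) bicat \<Rightarrow> ('o,'a) f2cell \<Rightarrow> ('o,'a) fword" where
  "fdom B (F2Id w) = w"
| "fdom B (F2As u v w) = FC (FC u v) w"
| "fdom B (F2AsI u v w) = FC u (FC v w)"
| "fdom B (F2Lu w) = FC (FU (wsrc B w)) w"
| "fdom B (F2LuI w) = w"
| "fdom B (F2Ru w) = FC w (FU (wtgt B w))"
| "fdom B (F2RuI w) = w"
| "fdom B (F2H f g) = FC (fdom B f) (fdom B g)"
| "fdom B (F2V g f) = fdom B f"
| "fcod B (F2Id w) = w"
| "fcod B (F2As u v w) = FC u (FC v w)"
| "fcod B (F2AsI u v w) = FC (FC u v) w"
| "fcod B (F2Lu w) = w"
| "fcod B (F2LuI w) = FC (FU (wsrc B w)) w"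
| "fcod B (F2Ru w) = w"
| "fcod B (F2RuI w) = FC w (FU (wtgt B w))"
| "fcod B (F2H f g) = FC (fcod B f) (fcod B g)"
| "fcod B (F2V g f) = fcod B g"

fun wf2 :: "('o,'a,'b) bicat \<Rightarrow> ('o,'a) f2cell \<Rightarrow> bool" where
  "wf2 B (F2Id w) = wfw B w"
| "wf2 B (F2As u v w) = (wfw B u \<and> wfw B v \<and> wfw B w \<and> wtgt B u = wsrc B v \<and> wtgt B v = wsrc B w)"
| "wf2 B (F2AsI u v w) = (wfw B u \<and> wfw B v \<and> wfw B w \<and> wtgt B u = wsrc B v \<and> wtgt B v = wsrc B w)"
| "wf2 B (F2Lu w) = wfw B w"
| "wf2 B (F2LuI w) = wfw B w"
| "wf2 B (F2Ru w) = wfw B w"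
| "wf2 B (F2RuI w) = wfw B w"
| "wf2 B (F2H f g) = (wf2 B f \<and> wf2 B g \<and> wtgt B (fdom B f) = wsrc B (fdom B g))"
| "wf2 B (F2V g f) = (wf2 B f \<and> wf2 B g \<and> fcod B f = fdom B g)"

text \<open>Morphism expressions of the shadow category Sh(U B): shadows of 2-cell expressions
  between endomorphism words, rotators FRot u v : shadow(u v) to shadow(v u), and composites
  (FSC g f is g after f).  Objects are (shadows of) endomorphism words.\<close>

datatype ('o,'a) fsh =
    FSh "('o,'a) f2cell"
  | FRot "('o,'a) fword" "('o,'a) fword"
  | FSC "('o,'a) fsh" "('o,'a) fsh"

fun sdom :: "('o,'a,'b) bicat \<Rightarrow> ('o,'a) fsh \<Rightarrow> ('o,'a) fword" where
  "sdom B (FSh f) = fdom B f"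
| "sdom B (FRot u v) = FC u v"
| "sdom B (FSC g f) = sdom B f"

fun scod :: "('o,'a,'b) bicat \<Rightarrow> ('o,'a) fsh \<Rightarrow> ('o,'a) fword" where
  "scod B (FSh f) = fcod B f"
| "scod B (FRot u v) = FC v u"
| "scod B (FSC g f) = scod B g"

fun wfs :: "('o,'a,'b) bicat \<Rightarrow> ('o,'a) fsh \<Rightarrow> bool" where
  "wfs B (FSh f) = (wf2 B f \<and> wsrc B (fdom B f) = wtgt B (fdom B f))"
| "wfs B (FRot u v) = (wfw B u \<and> wfw B v \<and> wtgt B u = wsrc B v \<and> wtgt B v = wsrc B u)"
| "wfs B (FSC g f) = (wfs B f \<and> wfs B g \<and> scod B f = sdom B g)"

text \<open>Underlying cyclic permutation: the bijection from letter positions of the source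
  to letter positions of the target.\<close>

fun cperm :: "('o,'a) fsh \<Rightarrow> nat \<Rightarrow> nat" where
  "cperm (FSh f) = (\<lambda>i. i)"
| "cperm (FRot u v) = (\<lambda>i. if i < length (letters u) then i + length (letters v) else i - length (letters u))"
| "cperm (FSC g f) = cperm g \<circ> cperm f"

fun iw :: "('o,'a,'b) bicat \<Rightarrow> ('o,'a) fword \<Rightarrow> 'a" where
  "iw B (FE e) = e"
| "iw B (FU A) = un B A"
| "iw B (FC u v) = hc B (iw B u) (iw B v)"

fun i2c :: "('o,'a,'b) bicat \<Rightarrow> ('o,'a) f2cell \<Rightarrow> 'b" where
  "i2c B (F2Id w) = i2 B (iw B w)"
| "i2c B (F2As u v w) = asc B (iw B u) (iw B v) (iw B w)"
| "i2c B (F2AsI u v w) = inv2 B (asc B (iw B u) (iw B v) (iw B w))"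
| "i2c B (F2Lu w) = lu B (iw B w)"
| "i2c B (F2LuI w) = inv2 B (lu B (iw B w))"
| "i2c B (F2Ru w) = ru B (iw B w)"
| "i2c B (F2RuI w) = inv2 B (ru B (iw B w))"
| "i2c B (F2H f g) = hc2 B (i2c B f) (i2c B g)"
| "i2c B (F2V g f) = vc B (i2c B g) (i2c B f)"

fun counit_sh :: "('o,'a,'b) bicat \<Rightarrow> ('a,'b,'t,'m) shadow \<Rightarrow> ('o,'a) fsh \<Rightarrow> 'm" where
  "counit_sh B S (FSh f) = shM S (i2c B f)"
| "counit_sh B S (FRot u v) = rot S (iw B u) (iw B v)"
| "counit_sh B S (FSC g f) = Tcomp S (counit_sh B S g) (counit_sh B S f)"

text \<open>A diagram in Sh(U B) is a set D of (well-formed) morphisms. A composite in D is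
  the composite of a nonempty path of consecutive arrows of D (listed in order of traversal).\<close>

definition is_path :: "('o,'a,'b) bicat \<Rightarrow> ('o,'a) fsh set \<Rightarrow> ('o,'a) fsh list \<Rightarrow> bool" where
  "is_path B D p \<longleftrightarrow> p \<noteq> [] \<and> set p \<subseteq> D \<and>
     (\<forall>i. Suc i < length p \<longrightarrow> scod B (p ! i) = sdom B (p ! Suc i))"

fun pcomp :: "('o,'a) fsh list \<Rightarrow> ('o,'a) fsh" where
  "pcomp [] = undefined"
| "pcomp [f] = f"
| "pcomp (f # g # r) = FSC (pcomp (g # r)) f"

definition parallel_paths :: "('o,'a,'b) bicat \<Rightarrow> ('o,'a) fsh set \<Rightarrow> ('o,'a) fsh list \<Rightarrow> ('o,'a) fsh list \<Rightarrow> bool" where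
  "parallel_paths B D p q \<longleftrightarrow> is_path B D p \<and> is_path B D q \<and>
     sdom B (pcomp p) = sdom B (pcomp q) \<and> scod B (pcomp p) = scod B (pcomp q)"

definition same_cperm :: "('o,'a,'b) bicat \<Rightarrow> ('o,'a) fsh \<Rightarrow> ('o,'a) fsh \<Rightarrow> bool" where
  "same_cperm B f g \<longleftrightarrow> (\<forall>i < length (letters (sdom B f)). cperm f i = cperm g i)"

definition is_sh_diagram :: "('o,'a,'b) bicat \<Rightarrow> ('o,'a) fsh set \<Rightarrow> bool" where
  "is_sh_diagram B D \<longleftrightarrow> (\<forall>f\<in>D. wfs B f)"

definition image_commutes :: "('o,'a,'b) bicat \<Rightarrow> ('a,'b,'t,'m) shadow \<Rightarrow> ('o,'a) fsh set \<Rightarrow> bool" where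
  "image_commutes B S D \<longleftrightarrow> (\<forall>p q. parallel_paths B D p q \<longrightarrow>
      counit_sh B S (pcomp p) = counit_sh B S (pcomp q))"

definition aperiodic :: "'x list \<Rightarrow> bool" where
  "aperiodic xs \<longleftrightarrow> (\<forall>k. 0 < k \<and> k < length xs \<longrightarrow> rotate k xs \<noteq> xs)"

definition diagram_on :: "('o,'a,'b) bicat \<Rightarrow> 'a list \<Rightarrow> ('o,'a) fsh set \<Rightarrow> bool" where
  "diagram_on B xs D \<longleftrightarrow> (\<forall>f\<in>D. (\<exists>k. letters (sdom B f) = rotate k xs) \<and>
                                   (\<exists>k. letters (scod B f) = rotate k xs))"

end

theory Submission
  imports Defs
begin

text \<open>
  By coherence for bicategories, every 1-cell word w of the free bicategory has a canonical
  isomorphism onto the right-bracketed normal form x1 (x2 (... (xn I))) of its letters, and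
  every free 2-cell becomes an identity when conjugated by these isomorphisms.
  In the shadow category, moving the first letter of a normal form to the back gives a
  rotation rho. Naturality of the rotator, its unit axiom and the hexagon show that the image
  of a rotator from the shadow of u v to the shadow of v u is conjugate to rho^|u|; hence the
  image of every morphism of Sh(U B) whose cyclic permutation is rotation by k is conjugate
  to rho^k. Since rho^n is the identity, the image depends only on the cyclic permutation.
  For an aperiodic list of letters the cyclic permutation of a morphism is determined by its
  source and target.
\<close>

locale shadowed_bicat =
  fixes B :: "('o,'a,'b) bicat" and S :: "('a,'b,'t,'m) shadow"
  assumes bicat: "is_bicat B" and shadow: "is_shadow B S"
begin

lemma hc_endpoints[simp]: "t1 B M = s1 B N \<Longrightarrow> s1 B (hc B M N) = s1 B M"
  "t1 B M = s1 B N \<Longrightarrow> t1 B (hc B M N) = t1 B N"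
  using bicat unfolding is_bicat_def by auto

lemma un_endpoints[simp]: "s1 B (un B A) = A" "t1 B (un B A) = A"
  using bicat unfolding is_bicat_def by auto

lemma cod_endpoints: "s1 B (c2 B f) = s1 B (d2 B f)" "t1 B (c2 B f) = t1 B (d2 B f)"
  using bicat unfolding is_bicat_def by auto

lemma i2_dom_cod[simp]: "d2 B (i2 B M) = M" "c2 B (i2 B M) = M"
  using bicat unfolding is_bicat_def by auto

lemma vc_dom_cod[simp]: "c2 B f = d2 B g \<Longrightarrow> d2 B (vc B g f) = d2 B f"
  "c2 B f = d2 B g \<Longrightarrow> c2 B (vc B g f) = c2 B g"
  using bicat unfolding is_bicat_def by auto

lemma vc_assoc: "c2 B f = d2 B g \<Longrightarrow> c2 B g = d2 B h \<Longrightarrow> vc B (vc B h g) f = vc B h (vc B g f)"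
  using bicat unfolding is_bicat_def by auto

lemma vc_ident[simp]: "vc B f (i2 B (d2 B f)) = f" "vc B (i2 B (c2 B f)) f = f"
  using bicat unfolding is_bicat_def by auto

lemma vc_ident'[simp]: "M = d2 B f \<Longrightarrow> vc B f (i2 B M) = f" "M = c2 B f \<Longrightarrow> vc B (i2 B M) f = f"
  by auto

lemma hc2_dom_cod[simp]: "t1 B (d2 B f) = s1 B (d2 B g) \<Longrightarrow> d2 B (hc2 B f g) = hc B (d2 B f) (d2 B g)"
  "t1 B (d2 B f) = s1 B (d2 B g) \<Longrightarrow> c2 B (hc2 B f g) = hc B (c2 B f) (c2 B g)"
  using bicat unfolding is_bicat_def by auto

lemma hc2_ident[simp]: "t1 B M = s1 B N \<Longrightarrow> hc2 B (i2 B M) (i2 B N) = i2 B (hc B M N)"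
  using bicat unfolding is_bicat_def by auto

lemma interchange: "c2 B f = d2 B f' \<Longrightarrow> c2 B g = d2 B g' \<Longrightarrow> t1 B (d2 B f) = s1 B (d2 B g) \<Longrightarrow>
        hc2 B (vc B f' f) (vc B g' g) = vc B (hc2 B f' g') (hc2 B f g)"
  using bicat unfolding is_bicat_def by auto

lemma asc_dom_cod[simp]: "t1 B M = s1 B N \<Longrightarrow> t1 B N = s1 B P \<Longrightarrow> d2 B (asc B M N P) = hc B (hc B M N) P"
  "t1 B M = s1 B N \<Longrightarrow> t1 B N = s1 B P \<Longrightarrow> c2 B (asc B M N P) = hc B M (hc B N P)"
  using bicat unfolding is_bicat_def by auto

lemma iso_asc: "t1 B M = s1 B N \<Longrightarrow> t1 B N = s1 B P \<Longrightarrow> iso2 B (asc B M N P)"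
  using bicat unfolding is_bicat_def by auto

lemma asc_natural: "t1 B (d2 B f) = s1 B (d2 B g) \<Longrightarrow> t1 B (d2 B g) = s1 B (d2 B h) \<Longrightarrow>
        vc B (asc B (c2 B f) (c2 B g) (c2 B h)) (hc2 B (hc2 B f g) h) =
        vc B (hc2 B f (hc2 B g h)) (asc B (d2 B f) (d2 B g) (d2 B h))"
  using bicat unfolding is_bicat_def by auto

lemma lu_dom_cod[simp]: "d2 B (lu B M) = hc B (un B (s1 B M)) M" "c2 B (lu B M) = M"
  using bicat unfolding is_bicat_def by auto

lemma iso_lu: "iso2 B (lu B M)"
  using bicat unfolding is_bicat_def by auto

lemma lu_natural: "vc B (lu B (c2 B f)) (hc2 B (i2 B (un B (s1 B (d2 B f)))) f) = vc B f (lu B (d2 B f))"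
  using bicat unfolding is_bicat_def by auto

lemma ru_dom_cod[simp]: "d2 B (ru B M) = hc B M (un B (t1 B M))" "c2 B (ru B M) = M"
  using bicat unfolding is_bicat_def by auto

lemma iso_ru: "iso2 B (ru B M)"
  using bicat unfolding is_bicat_def by auto

lemma ru_natural: "vc B (ru B (c2 B f)) (hc2 B f (i2 B (un B (t1 B (d2 B f))))) = vc B f (ru B (d2 B f))"
  using bicat unfolding is_bicat_def by auto

lemma pentagon: "t1 B M = s1 B N \<Longrightarrow> t1 B N = s1 B P \<Longrightarrow> t1 B P = s1 B Q \<Longrightarrow>
        vc B (asc B M N (hc B P Q)) (asc B (hc B M N) P Q) =
        vc B (hc2 B (i2 B M) (asc B N P Q))
             (vc B (asc B M (hc B N P) Q) (hc2 B (asc B M N P) (i2 B Q)))"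
  using bicat unfolding is_bicat_def by auto

lemma triangle: "t1 B M = s1 B N \<Longrightarrow>
        vc B (hc2 B (i2 B M) (lu B N)) (asc B M (un B (t1 B M)) N) = hc2 B (ru B M) (i2 B N)"
  using bicat unfolding is_bicat_def by auto

lemma Tid_dom_cod[simp]: "Td S (Tid S x) = x" "Tc S (Tid S x) = x"
  using shadow unfolding is_shadow_def by auto

lemma Tcomp_dom_cod[simp]: "Tc S f = Td S g \<Longrightarrow> Td S (Tcomp S g f) = Td S f"
  "Tc S f = Td S g \<Longrightarrow> Tc S (Tcomp S g f) = Tc S g"
  using shadow unfolding is_shadow_def by auto

lemma Tcomp_assoc: "Tc S f = Td S g \<Longrightarrow> Tc S g = Td S h \<Longrightarrow> Tcomp S (Tcomp S h g) f = Tcomp S h (Tcomp S g f)"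
  using shadow unfolding is_shadow_def by auto

lemma Tcomp_Tid[simp]: "Tcomp S f (Tid S (Td S f)) = f" "Tcomp S (Tid S (Tc S f)) f = f"
  using shadow unfolding is_shadow_def by auto

lemma Tcomp_Tid'[simp]: "x = Td S f \<Longrightarrow> Tcomp S f (Tid S x) = f" "x = Tc S f \<Longrightarrow> Tcomp S (Tid S x) f = f"
  by auto

lemma shM_dom_cod[simp]: "s1 B (d2 B f) = t1 B (d2 B f) \<Longrightarrow> Td S (shM S f) = shO S (d2 B f)"
  "s1 B (d2 B f) = t1 B (d2 B f) \<Longrightarrow> Tc S (shM S f) = shO S (c2 B f)"
  using shadow unfolding is_shadow_def by auto

lemma shM_id[simp]: "s1 B M = t1 B M \<Longrightarrow> shM S (i2 B M) = Tid S (shO S M)"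
  using shadow unfolding is_shadow_def by auto

lemma shM_vc: "s1 B (d2 B f) = t1 B (d2 B f) \<Longrightarrow> c2 B f = d2 B g \<Longrightarrow> shM S (vc B g f) = Tcomp S (shM S g) (shM S f)"
  using shadow unfolding is_shadow_def by auto

lemma rot_dom_cod[simp]: "t1 B M = s1 B N \<Longrightarrow> t1 B N = s1 B M \<Longrightarrow> Td S (rot S M N) = shO S (hc B M N)"
  "t1 B M = s1 B N \<Longrightarrow> t1 B N = s1 B M \<Longrightarrow> Tc S (rot S M N) = shO S (hc B N M)"
  using shadow unfolding is_shadow_def by auto

lemma rot_rot: "t1 B M = s1 B N \<Longrightarrow> t1 B N = s1 B M \<Longrightarrow> Tcomp S (rot S N M) (rot S M N) = Tid S (shO S (hc B M N))"
  using shadow unfolding is_shadow_def by auto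

lemma rot_natural: "t1 B (d2 B f) = s1 B (d2 B g) \<Longrightarrow> t1 B (d2 B g) = s1 B (d2 B f) \<Longrightarrow>
        Tcomp S (rot S (c2 B f) (c2 B g)) (shM S (hc2 B f g)) =
        Tcomp S (shM S (hc2 B g f)) (rot S (d2 B f) (d2 B g))"
  using shadow unfolding is_shadow_def by auto

lemma rot_unit: "s1 B X = t1 B X \<Longrightarrow> Tcomp S (shM S (lu B X)) (rot S X (un B (t1 B X))) = shM S (ru B X)"
  using shadow unfolding is_shadow_def by auto

lemma hexagon: "t1 B X = s1 B Y \<Longrightarrow> t1 B Y = s1 B Z \<Longrightarrow> t1 B Z = s1 B X \<Longrightarrow>
        Tcomp S (rot S (hc B Z X) Y)
          (Tcomp S (shM S (inv2 B (asc B Z X Y))) (rot S (hc B X Y) Z)) =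
        Tcomp S (shM S (asc B Y Z X))
          (Tcomp S (rot S X (hc B Y Z)) (shM S (asc B X Y Z)))"
  using shadow unfolding is_shadow_def by auto

lemma inverse2_unique: assumes "is_inverse2 B f g" "is_inverse2 B f h" shows "g = h"
proof -
  have "g = vc B g (vc B f h)" using assms unfolding is_inverse2_def by (metis vc_ident(1))
  also have "\<dots> = vc B (vc B g f) h" using assms unfolding is_inverse2_def by (intro vc_assoc[symmetric]) auto
  also have "\<dots> = h" using assms unfolding is_inverse2_def by (metis vc_ident(2))
  finally show ?thesis .
qed

lemma is_inverse2_inv2: "iso2 B f \<Longrightarrow> is_inverse2 B f (inv2 B f)"
  unfolding iso2_def inv2_def by (metis inverse2_unique theI)

lemma inv2_eqI: "is_inverse2 B f g \<Longrightarrow> inv2 B f = g"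
  proof -
  assume a: "is_inverse2 B f g"
  then have "iso2 B f" unfolding iso2_def by blast
  then show ?thesis using is_inverse2_inv2[of f] inverse2_unique[OF _ a] by blast
qed

lemma inv2_dom_cod[simp]: "iso2 B f \<Longrightarrow> d2 B (inv2 B f) = c2 B f" "iso2 B f \<Longrightarrow> c2 B (inv2 B f) = d2 B f"
  using is_inverse2_inv2 unfolding is_inverse2_def by auto

lemma vc_inv2_iso[simp]: "iso2 B f \<Longrightarrow> vc B (inv2 B f) f = i2 B (d2 B f)"
  and vc_iso_inv2[simp]: "iso2 B f \<Longrightarrow> vc B f (inv2 B f) = i2 B (c2 B f)"
  using is_inverse2_inv2 unfolding is_inverse2_def by auto

lemma iso2I: "is_inverse2 B f g \<Longrightarrow> iso2 B f"
  unfolding iso2_def by blast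

lemma iso2_inv2[simp]: "iso2 B f \<Longrightarrow> iso2 B (inv2 B f)"
proof -
  assume "iso2 B f"
  then have "is_inverse2 B (inv2 B f) f" using is_inverse2_inv2 unfolding is_inverse2_def by auto
  then show ?thesis by (rule iso2I)
qed

lemma iso2_i2[simp]: "iso2 B (i2 B M)" and inv2_i2[simp]: "inv2 B (i2 B M) = i2 B M"
proof -
  have "is_inverse2 B (i2 B M) (i2 B M)" unfolding is_inverse2_def by simp
  then show "iso2 B (i2 B M)" "inv2 B (i2 B M) = i2 B M" using inv2_eqI iso2I by auto
qed

lemma iso2_vc: assumes "iso2 B f" "iso2 B g" "c2 B f = d2 B g"
  shows "iso2 B (vc B g f)" "inv2 B (vc B g f) = vc B (inv2 B f) (inv2 B g)"
proof -
  have "is_inverse2 B (vc B g f) (vc B (inv2 B f) (inv2 B g))"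
  proof -
    have 1: "vc B (vc B (inv2 B f) (inv2 B g)) (vc B g f) = i2 B (d2 B f)"
      using assms by (simp add: vc_assoc[of "vc B g f"] vc_assoc[of f g "inv2 B g", symmetric])
    have 2: "vc B (vc B g f) (vc B (inv2 B f) (inv2 B g)) = i2 B (c2 B g)"
      using assms by (simp add: vc_assoc[of "vc B (inv2 B f) (inv2 B g)" f g] vc_assoc[of "inv2 B g" "inv2 B f" f, symmetric])
    show ?thesis unfolding is_inverse2_def using assms 1 2 by simp
  qed
  then show "iso2 B (vc B g f)" "inv2 B (vc B g f) = vc B (inv2 B f) (inv2 B g)"
    using inv2_eqI iso2I by auto
qed

lemma iso2_hc2: assumes "iso2 B f" "iso2 B g" "t1 B (d2 B f) = s1 B (d2 B g)"
  shows "iso2 B (hc2 B f g)" "inv2 B (hc2 B f g) = hc2 B (inv2 B f) (inv2 B g)"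
proof -
  have t: "t1 B (c2 B f) = s1 B (c2 B g)" using assms(3) cod_endpoints by simp
  have "is_inverse2 B (hc2 B f g) (hc2 B (inv2 B f) (inv2 B g))"
    unfolding is_inverse2_def using assms t cod_endpoints
    by (simp add: interchange[symmetric])
  then show "iso2 B (hc2 B f g)" "inv2 B (hc2 B f g) = hc2 B (inv2 B f) (inv2 B g)"
    using inv2_eqI iso2I by auto
qed

lemma iso2_cancel_left: assumes "iso2 B f" "c2 B g = d2 B f" "c2 B h = d2 B f" "vc B f g = vc B f h"
  shows "g = h"
proof -
  have "g = vc B (vc B (inv2 B f) f) g" using assms by simp
  also have "\<dots> = vc B (inv2 B f) (vc B f g)" using assms by (intro vc_assoc) auto
  also have "\<dots> = vc B (inv2 B f) (vc B f h)" using assms by simp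
  also have "\<dots> = vc B (vc B (inv2 B f) f) h" using assms by (intro vc_assoc[symmetric]) auto
  also have "\<dots> = h" using assms by simp
  finally show ?thesis .
qed

lemma iso2_cancel_right: assumes "iso2 B f" "d2 B g = c2 B f" "d2 B h = c2 B f" "vc B g f = vc B h f"
  shows "g = h"
proof -
  have "g = vc B g (vc B f (inv2 B f))" using assms by simp
  also have "\<dots> = vc B (vc B g f) (inv2 B f)" using assms by (intro vc_assoc[symmetric]) auto
  also have "\<dots> = vc B (vc B h f) (inv2 B f)" using assms by simp
  also have "\<dots> = vc B h (vc B f (inv2 B f))" using assms by (intro vc_assoc) auto
  also have "\<dots> = h" using assms by simp
  finally show ?thesis .
qed

lemma vc_inv2_eq: "iso2 B f \<Longrightarrow> c2 B f = d2 B c \<Longrightarrow> vc B c f = d \<Longrightarrow> vc B d (inv2 B f) = c"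
proof -
  assume a: "iso2 B f" "c2 B f = d2 B c" "vc B c f = d"
  have "vc B d (inv2 B f) = vc B (vc B c f) (inv2 B f)" using a(3) by simp
  also have "\<dots> = vc B c (vc B f (inv2 B f))" using a(1,2) by (intro vc_assoc) auto
  also have "\<dots> = c" using a(1,2) by simp
  finally show ?thesis .
qed

lemma T_iso_cancel_right: assumes "Tcomp S k h = Tid S (Tc S k)" "Tc S h = Td S k"
  "Td S f = Tc S k" "Td S g = Tc S k" "Tcomp S f k = Tcomp S g k" shows "f = g"
proof -
  have "f = Tcomp S f (Tcomp S k h)" using assms(1,3) by simp
  also have "\<dots> = Tcomp S (Tcomp S f k) h" using assms(2,3) by (intro Tcomp_assoc[symmetric]) auto
  also have "\<dots> = Tcomp S (Tcomp S g k) h" using assms(5) by simp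
  also have "\<dots> = Tcomp S g (Tcomp S k h)" using assms(2,4) by (intro Tcomp_assoc) auto
  also have "\<dots> = g" using assms(1,4) by simp
  finally show ?thesis .
qed

lemma T_iso_cancel_left: assumes "Tcomp S h k = Tid S (Td S k)" "Td S h = Tc S k"
  "Tc S f = Td S k" "Tc S g = Td S k" "Tcomp S k f = Tcomp S k g" shows "f = g"
proof -
  have "f = Tcomp S (Tcomp S h k) f" using assms(1,3) by simp
  also have "\<dots> = Tcomp S h (Tcomp S k f)" using assms(2,3) by (intro Tcomp_assoc) auto
  also have "\<dots> = Tcomp S h (Tcomp S k g)" using assms(5) by simp
  also have "\<dots> = Tcomp S (Tcomp S h k) g" using assms(2,4) by (intro Tcomp_assoc[symmetric]) auto
  also have "\<dots> = g" using assms(1,4) by simp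
  finally show ?thesis .
qed

lemma shM_inv2: assumes "iso2 B f" "s1 B (d2 B f) = t1 B (d2 B f)"
  shows "Tcomp S (shM S f) (shM S (inv2 B f)) = Tid S (Tc S (shM S f))"
    "Tcomp S (shM S (inv2 B f)) (shM S f) = Tid S (Td S (shM S f))"
    "Td S (shM S (inv2 B f)) = Tc S (shM S f)" "Tc S (shM S (inv2 B f)) = Td S (shM S f)"
proof -
  have e: "s1 B (c2 B f) = t1 B (c2 B f)" using assms(2) cod_endpoints by simp
  have e2: "s1 B (d2 B (inv2 B f)) = t1 B (d2 B (inv2 B f))" using e assms(1) by simp
  show "Tcomp S (shM S f) (shM S (inv2 B f)) = Tid S (Tc S (shM S f))"
    using shM_vc[OF e2, of f] assms e by simp
  show "Tcomp S (shM S (inv2 B f)) (shM S f) = Tid S (Td S (shM S f))"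
    using shM_vc[OF assms(2), of "inv2 B f"] assms e by simp
  show "Td S (shM S (inv2 B f)) = Tc S (shM S f)" "Tc S (shM S (inv2 B f)) = Td S (shM S f)"
    using assms e e2 by auto
qed

lemma lu_whisker_cancel: assumes "d2 B f = X" "d2 B g = X" "c2 B f = c2 B g"
  "hc2 B (i2 B (un B (s1 B X))) f = hc2 B (i2 B (un B (s1 B X))) g" shows "f = g"
proof -
  have "vc B f (lu B X) = vc B (lu B (c2 B f)) (hc2 B (i2 B (un B (s1 B X))) f)"
    using lu_natural[of f] assms(1) by simp
  also have "\<dots> = vc B (lu B (c2 B g)) (hc2 B (i2 B (un B (s1 B X))) g)"
    using assms(3,4) by simp
  also have "\<dots> = vc B g (lu B X)"
    using lu_natural[of g] assms(2) by simp
  finally have e: "vc B f (lu B X) = vc B g (lu B X)" .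
  show ?thesis by (rule iso2_cancel_right[of "lu B X", OF iso_lu _ _ e]) (simp_all add: assms(1,2))
qed

lemma ru_whisker_cancel: assumes "d2 B f = X" "d2 B g = X" "c2 B f = c2 B g"
  "hc2 B f (i2 B (un B (t1 B X))) = hc2 B g (i2 B (un B (t1 B X)))" shows "f = g"
proof -
  have "vc B f (ru B X) = vc B (ru B (c2 B f)) (hc2 B f (i2 B (un B (t1 B X))))"
    using ru_natural[of f] assms(1) by simp
  also have "\<dots> = vc B (ru B (c2 B g)) (hc2 B g (i2 B (un B (t1 B X))))"
    using assms(3,4) by simp
  also have "\<dots> = vc B g (ru B X)"
    using ru_natural[of g] assms(2) by simp
  finally have e: "vc B f (ru B X) = vc B g (ru B X)" .
  show ?thesis by (rule iso2_cancel_right[of "ru B X", OF iso_ru _ _ e]) (simp_all add: assms(1,2))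
qed

lemma hc2_vc_left: "c2 B f = d2 B g \<Longrightarrow> t1 B (d2 B f) = s1 B (d2 B h) \<Longrightarrow>
    hc2 B (vc B g f) h = vc B (hc2 B g (i2 B (c2 B h))) (hc2 B f h)"
  using interchange[of f g h "i2 B (c2 B h)"] by simp

lemma hc2_vc_right: "c2 B f = d2 B g \<Longrightarrow> t1 B (d2 B h) = s1 B (d2 B f) \<Longrightarrow>
    hc2 B h (vc B g f) = vc B (hc2 B (i2 B (c2 B h)) g) (hc2 B h f)"
  using interchange[of h "i2 B (c2 B h)" f g] by simp

lemma whiskers_commute: assumes "t1 B (d2 B f) = s1 B (d2 B g)"
  shows "vc B (hc2 B (i2 B (c2 B f)) g) (hc2 B f (i2 B (d2 B g))) = vc B (hc2 B f (i2 B (c2 B g))) (hc2 B (i2 B (d2 B f)) g)"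
proof -
  have "vc B (hc2 B (i2 B (c2 B f)) g) (hc2 B f (i2 B (d2 B g))) = hc2 B f g"
    using interchange[of f "i2 B (c2 B f)" "i2 B (d2 B g)" g] assms by simp
  also have "\<dots> = vc B (hc2 B f (i2 B (c2 B g))) (hc2 B (i2 B (d2 B f)) g)"
    using interchange[of "i2 B (d2 B f)" f g "i2 B (c2 B g)"] assms by simp
  finally show ?thesis .
qed

text \<open>Kelly's consequences of the pentagon and triangle axioms: whiskering with a unit is
  faithful, so it suffices to compare both sides after whiskering, where the pentagon and the
  triangle identify them.\<close>

lemma lunit_hcomp: assumes mn: "t1 B M = s1 B N"
  shows "vc B (lu B (hc B M N)) (asc B (un B (s1 B M)) M N) = hc2 B (lu B M) (i2 B N)"
proof -
  define I where "I = un B (s1 B M)"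
  have tI: "t1 B I = s1 B M" "s1 B I = s1 B M" "un B (s1 B M) = I" unfolding I_def by simp_all
  define P where "P = vc B (asc B I (hc B I M) N) (hc2 B (asc B I I M) (i2 B N))"
  have Pd: "d2 B P = hc B (hc B (hc B I I) M) N" "c2 B P = hc B I (hc B (hc B I M) N)"
    unfolding P_def using tI mn by simp_all
  have Piso: "iso2 B P" unfolding P_def using tI mn
    by (intro iso2_vc iso2_hc2 iso_asc) auto
  have "vc B (hc2 B (i2 B I) (vc B (lu B (hc B M N)) (asc B I M N))) P
      = vc B (hc2 B (i2 B I) (lu B (hc B M N))) (vc B (hc2 B (i2 B I) (asc B I M N)) P)"
    using tI mn by (simp add: hc2_vc_right P_def vc_assoc)
  also have "\<dots> = vc B (hc2 B (i2 B I) (lu B (hc B M N))) (vc B (asc B I I (hc B M N)) (asc B (hc B I I) M N))"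
    using pentagon[of I I M N] tI mn unfolding P_def by simp
  also have "\<dots> = vc B (vc B (hc2 B (i2 B I) (lu B (hc B M N))) (asc B I I (hc B M N))) (asc B (hc B I I) M N)"
    using tI mn by (simp add: vc_assoc)
  also have "\<dots> = vc B (hc2 B (ru B I) (i2 B (hc B M N))) (asc B (hc B I I) M N)"
    using triangle[of I "hc B M N"] tI mn by simp
  also have "\<dots> = vc B (asc B I M N) (hc2 B (hc2 B (ru B I) (i2 B M)) (i2 B N))"
    using asc_natural[of "ru B I" "i2 B M" "i2 B N"] tI mn by simp
  also have "\<dots> = vc B (asc B I M N) (hc2 B (vc B (hc2 B (i2 B I) (lu B M)) (asc B I I M)) (i2 B N))"
    using triangle[of I M] tI by simp
  also have "\<dots> = vc B (vc B (asc B I M N) (hc2 B (hc2 B (i2 B I) (lu B M)) (i2 B N))) (hc2 B (asc B I I M) (i2 B N))"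
    using tI mn by (simp add: hc2_vc_left vc_assoc)
  also have "\<dots> = vc B (vc B (hc2 B (i2 B I) (hc2 B (lu B M) (i2 B N))) (asc B I (hc B I M) N)) (hc2 B (asc B I I M) (i2 B N))"
    using asc_natural[of "i2 B I" "lu B M" "i2 B N"] tI mn by simp
  also have "\<dots> = vc B (hc2 B (i2 B I) (hc2 B (lu B M) (i2 B N))) P"
    using tI mn by (simp add: P_def vc_assoc)
  finally have E: "vc B (hc2 B (i2 B I) (vc B (lu B (hc B M N)) (asc B I M N))) P =
      vc B (hc2 B (i2 B I) (hc2 B (lu B M) (i2 B N))) P" .
  have "hc2 B (i2 B I) (vc B (lu B (hc B M N)) (asc B I M N)) = hc2 B (i2 B I) (hc2 B (lu B M) (i2 B N))"
    by (rule iso2_cancel_right[OF Piso _ _ E]) (use tI mn Pd in simp_all)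
  then have F: "hc2 B (i2 B (un B (s1 B (hc B (hc B I M) N)))) (vc B (lu B (hc B M N)) (asc B I M N)) = hc2 B (i2 B (un B (s1 B (hc B (hc B I M) N)))) (hc2 B (lu B M) (i2 B N))"
    using tI mn by simp
  have "vc B (lu B (hc B M N)) (asc B I M N) = hc2 B (lu B M) (i2 B N)"
    by (rule lu_whisker_cancel[OF _ _ _ F]) (use tI mn in simp_all)
  then show ?thesis using tI by simp
qed

lemma runit_hcomp: assumes mn: "t1 B M = s1 B N"
  shows "vc B (hc2 B (i2 B M) (ru B N)) (asc B M N (un B (t1 B N))) = ru B (hc B M N)"
proof -
  define I where "I = un B (t1 B N)"
  have tI: "t1 B I = t1 B N" "s1 B I = t1 B N" "un B (t1 B N) = I" unfolding I_def by simp_all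
  have Qiso: "iso2 B (asc B M N I)" using tI mn by (intro iso_asc) auto
  have "vc B (asc B M N I) (hc2 B (ru B (hc B M N)) (i2 B I))
      = vc B (asc B M N I) (vc B (hc2 B (i2 B (hc B M N)) (lu B I)) (asc B (hc B M N) I I))"
    using triangle[of "hc B M N" I] tI mn by simp
  also have "\<dots> = vc B (vc B (asc B M N I) (hc2 B (hc2 B (i2 B M) (i2 B N)) (lu B I))) (asc B (hc B M N) I I)"
    using tI mn by (simp add: vc_assoc)
  also have "\<dots> = vc B (vc B (hc2 B (i2 B M) (hc2 B (i2 B N) (lu B I))) (asc B M N (hc B I I))) (asc B (hc B M N) I I)"
    using asc_natural[of "i2 B M" "i2 B N" "lu B I"] tI mn by simp
  also have "\<dots> = vc B (hc2 B (i2 B M) (hc2 B (i2 B N) (lu B I))) (vc B (asc B M N (hc B I I)) (asc B (hc B M N) I I))"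
    using tI mn by (simp add: vc_assoc)
  also have "\<dots> = vc B (hc2 B (i2 B M) (hc2 B (i2 B N) (lu B I)))
         (vc B (hc2 B (i2 B M) (asc B N I I)) (vc B (asc B M (hc B N I) I) (hc2 B (asc B M N I) (i2 B I))))"
    using pentagon[of M N I I] tI mn by simp
  also have "\<dots> = vc B (vc B (hc2 B (i2 B M) (vc B (hc2 B (i2 B N) (lu B I)) (asc B N I I)))
         (asc B M (hc B N I) I)) (hc2 B (asc B M N I) (i2 B I))"
    using tI mn by (simp add: vc_assoc hc2_vc_right)
  also have "\<dots> = vc B (vc B (hc2 B (i2 B M) (hc2 B (ru B N) (i2 B I)))
         (asc B M (hc B N I) I)) (hc2 B (asc B M N I) (i2 B I))"
    using triangle[of N I] tI mn by simp
  also have "\<dots> = vc B (vc B (asc B M N I) (hc2 B (hc2 B (i2 B M) (ru B N)) (i2 B I)))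
         (hc2 B (asc B M N I) (i2 B I))"
    using asc_natural[of "i2 B M" "ru B N" "i2 B I"] tI mn by simp
  also have "\<dots> = vc B (asc B M N I) (hc2 B (vc B (hc2 B (i2 B M) (ru B N)) (asc B M N I)) (i2 B I))"
    using tI mn by (simp add: vc_assoc hc2_vc_left)
  finally have E: "vc B (asc B M N I) (hc2 B (ru B (hc B M N)) (i2 B I)) =
     vc B (asc B M N I) (hc2 B (vc B (hc2 B (i2 B M) (ru B N)) (asc B M N I)) (i2 B I))" .
  have F: "hc2 B (ru B (hc B M N)) (i2 B I) = hc2 B (vc B (hc2 B (i2 B M) (ru B N)) (asc B M N I)) (i2 B I)"
    by (rule iso2_cancel_left[OF Qiso _ _ E]) (use tI mn in simp_all)
  have F': "hc2 B (vc B (hc2 B (i2 B M) (ru B N)) (asc B M N I)) (i2 B (un B (t1 B (hc B (hc B M N) I))))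
     = hc2 B (ru B (hc B M N)) (i2 B (un B (t1 B (hc B (hc B M N) I))))"
    using F tI mn by simp
  have "vc B (hc2 B (i2 B M) (ru B N)) (asc B M N I) = ru B (hc B M N)"
    by (rule ru_whisker_cancel[OF _ _ _ F']) (use tI mn in simp_all)
  then show ?thesis using tI by simp
qed

lemma unitor_coincidence: "lu B (un B A) = ru B (un B A)"
proof -
  define I where "I = un B A"
  have tI: "t1 B I = A" "s1 B I = A" "un B A = I" unfolding I_def by simp_all
  have E: "vc B (lu B I) (hc2 B (i2 B I) (lu B I)) = vc B (lu B I) (lu B (hc B I I))"
    using lu_natural[of "lu B I"] tI by simp
  have L: "hc2 B (i2 B I) (lu B I) = lu B (hc B I I)"
    by (rule iso2_cancel_left[OF iso_lu _ _ E]) (use tI in simp_all)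
  have "hc2 B (ru B I) (i2 B I) = vc B (hc2 B (i2 B I) (lu B I)) (asc B I I I)"
    using triangle[of I I] tI by simp
  also have "\<dots> = vc B (lu B (hc B I I)) (asc B I I I)" using L by simp
  also have "\<dots> = hc2 B (lu B I) (i2 B I)" using lunit_hcomp[of I I] tI by simp
  finally have F: "hc2 B (lu B I) (i2 B (un B (t1 B (hc B I I)))) = hc2 B (ru B I) (i2 B (un B (t1 B (hc B I I))))"
    using tI by simp
  have "lu B I = ru B I" by (rule ru_whisker_cancel[OF _ _ _ F]) (use tI in simp_all)
  then show ?thesis unfolding I_def .
qed

end

section \<open>Normal forms and coherence\<close>

fun chain :: "('o,'a,'b) bicat \<Rightarrow> 'o \<Rightarrow> 'a list \<Rightarrow> 'o \<Rightarrow> bool" where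
  "chain B a [] b = (a = b)"
| "chain B a (x # r) b = (s1 B x = a \<and> chain B (t1 B x) r b)"

fun nf :: "('o,'a,'b) bicat \<Rightarrow> 'o \<Rightarrow> 'a list \<Rightarrow> 'a" where
  "nf B c [] = un B c"
| "nf B c (x # r) = hc B x (nf B c r)"

text \<open>The canonical isomorphism nf L1 \<odot> nf L2 \<Rightarrow> nf (L1 @ L2), built from associators and a
  left unitor.\<close>

fun merge :: "('o,'a,'b) bicat \<Rightarrow> 'o \<Rightarrow> 'a list \<Rightarrow> 'a list \<Rightarrow> 'b" where
  "merge B c [] L2 = lu B (nf B c L2)"
| "merge B c (x # r) L2 = vc B (hc2 B (i2 B x) (merge B c r L2)) (asc B x (nf B (s1 B (nf B c L2)) r) (nf B c L2))"

lemma chain_append[simp]: "chain B a (L1 @ L2) c = (\<exists>b. chain B a L1 b \<and> chain B b L2 c)"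
  by (induction L1 arbitrary: a) auto

text \<open>The canonical isomorphism from a word to the normal form of its letters.\<close>

fun canon :: "('o,'a,'b) bicat \<Rightarrow> ('o,'a) fword \<Rightarrow> 'b" where
  "canon B (FE e) = inv2 B (ru B e)"
| "canon B (FU A) = i2 B (un B A)"
| "canon B (FC u v) = vc B (merge B (wtgt B v) (letters u) (letters v)) (hc2 B (canon B u) (canon B v))"

context shadowed_bicat
begin

lemma nf_endpoints: "chain B a L b \<Longrightarrow> s1 B (nf B b L) = a \<and> t1 B (nf B b L) = b"
  by (induction L arbitrary: a) auto

lemma merge_dom_cod_iso: "chain B a L1 b \<Longrightarrow> chain B b L2 c \<Longrightarrow>
   d2 B (merge B c L1 L2) = hc B (nf B b L1) (nf B c L2) \<and> c2 B (merge B c L1 L2) = nf B c (L1 @ L2) \<and> iso2 B (merge B c L1 L2)"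
proof (induction L1 arbitrary: a)
  case Nil
  then show ?case using nf_endpoints[of b L2 c] by (simp add: iso_lu)
next
  case (Cons x r)
  then have x: "s1 B x = a" and r: "chain B (t1 B x) r b" by auto
  have IH: "d2 B (merge B c r L2) = hc B (nf B b r) (nf B c L2)" "c2 B (merge B c r L2) = nf B c (r @ L2)"
    "iso2 B (merge B c r L2)" using Cons.IH[OF r Cons.prems(2)] by auto
  have s: "s1 B (nf B c L2) = b" "t1 B (nf B c L2) = c" using nf_endpoints[OF Cons.prems(2)] by auto
  have s2: "s1 B (nf B b r) = t1 B x" "t1 B (nf B b r) = b" using nf_endpoints[OF r] by auto
  show ?case using IH s s2
    by (auto intro!: iso2_vc iso2_hc2 iso_asc)
qed

lemma merge_assoc: "chain B a L1 b \<Longrightarrow> chain B b L2 c \<Longrightarrow> chain B c L3 d \<Longrightarrow>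
  vc B (merge B d (L1 @ L2) L3) (hc2 B (merge B c L1 L2) (i2 B (nf B d L3))) =
  vc B (merge B d L1 (L2 @ L3)) (vc B (hc2 B (i2 B (nf B b L1)) (merge B d L2 L3)) (asc B (nf B b L1) (nf B c L2) (nf B d L3)))"
proof (induction L1 arbitrary: a)
  case Nil
  then have ab: "a = b" by simp
  have t2: "s1 B (nf B c L2) = b" "t1 B (nf B c L2) = c" using nf_endpoints[OF Nil.prems(2)] by auto
  have t3: "s1 B (nf B d L3) = c" "t1 B (nf B d L3) = d" using nf_endpoints[OF Nil.prems(3)] by auto
  have ch23: "chain B b (L2 @ L3) d" using Nil.prems by auto
  have t23: "s1 B (nf B d (L2 @ L3)) = b" "t1 B (nf B d (L2 @ L3)) = d" using nf_endpoints[OF ch23] by auto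
  have m3: "d2 B (merge B d L2 L3) = hc B (nf B c L2) (nf B d L3)" "c2 B (merge B d L2 L3) = nf B d (L2 @ L3)"
    using merge_dom_cod_iso[OF Nil.prems(2,3)] by auto
  note T = t2 t3 t23 m3
  have "vc B (lu B (nf B d (L2 @ L3))) (vc B (hc2 B (i2 B (un B b)) (merge B d L2 L3)) (asc B (un B b) (nf B c L2) (nf B d L3)))
     = vc B (vc B (lu B (nf B d (L2 @ L3))) (hc2 B (i2 B (un B b)) (merge B d L2 L3))) (asc B (un B b) (nf B c L2) (nf B d L3))"
    using T by (simp add: vc_assoc)
  also have "\<dots> = vc B (vc B (merge B d L2 L3) (lu B (hc B (nf B c L2) (nf B d L3)))) (asc B (un B b) (nf B c L2) (nf B d L3))"
    using lu_natural[of "merge B d L2 L3"] T by simp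
  also have "\<dots> = vc B (merge B d L2 L3) (vc B (lu B (hc B (nf B c L2) (nf B d L3))) (asc B (un B b) (nf B c L2) (nf B d L3)))"
    using T by (simp add: vc_assoc)
  also have "\<dots> = vc B (merge B d L2 L3) (hc2 B (lu B (nf B c L2)) (i2 B (nf B d L3)))"
    using lunit_hcomp[of "nf B c L2" "nf B d L3"] T by simp
  finally show ?case using T by simp
next
  case (Cons x r)
  then have x: "s1 B x = a" and r: "chain B (t1 B x) r b" by auto
  note IH = Cons.IH[OF r Cons.prems(2,3)]
  have ch2: "chain B b L2 c" and ch3: "chain B c L3 d" using Cons.prems by auto
  have ch23: "chain B b (L2 @ L3) d" using ch2 ch3 by auto
  have chr2: "chain B (t1 B x) (r @ L2) c" using r ch2 by auto
  have tR: "s1 B (nf B b r) = t1 B x" "t1 B (nf B b r) = b" using nf_endpoints[OF r] by auto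
  have t2: "s1 B (nf B c L2) = b" "t1 B (nf B c L2) = c" using nf_endpoints[OF ch2] by auto
  have t3: "s1 B (nf B d L3) = c" "t1 B (nf B d L3) = d" using nf_endpoints[OF ch3] by auto
  have t23: "s1 B (nf B d (L2 @ L3)) = b" "t1 B (nf B d (L2 @ L3)) = d" using nf_endpoints[OF ch23] by auto
  have tR2: "s1 B (nf B c (r @ L2)) = t1 B x" "t1 B (nf B c (r @ L2)) = c" using nf_endpoints[OF chr2] by auto
  have m1: "d2 B (merge B d (r @ L2) L3) = hc B (nf B c (r @ L2)) (nf B d L3)" "c2 B (merge B d (r @ L2) L3) = nf B d (r @ L2 @ L3)"
    using merge_dom_cod_iso[OF chr2 ch3] by auto
  have m2: "d2 B (merge B c r L2) = hc B (nf B b r) (nf B c L2)" "c2 B (merge B c r L2) = nf B c (r @ L2)"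
    using merge_dom_cod_iso[OF r ch2] by auto
  have m3: "d2 B (merge B d L2 L3) = hc B (nf B c L2) (nf B d L3)" "c2 B (merge B d L2 L3) = nf B d (L2 @ L3)"
    using merge_dom_cod_iso[OF ch2 ch3] by auto
  have m4: "d2 B (merge B d r (L2 @ L3)) = hc B (nf B b r) (nf B d (L2 @ L3))" "c2 B (merge B d r (L2 @ L3)) = nf B d (r @ L2 @ L3)"
    using merge_dom_cod_iso[OF r ch23] by auto
  note T = tR t2 t3 t23 tR2 m1 m2 m3 m4
  define ix where "ix = i2 B x"
  have ix: "d2 B ix = x" "c2 B ix = x" unfolding ix_def by auto
  note T = T ix
  have L: "merge B d ((x # r) @ L2) L3 = vc B (hc2 B ix (merge B d (r @ L2) L3)) (asc B x (nf B c (r @ L2)) (nf B d L3))"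
    using T by (simp add: ix_def)
  have L2: "merge B c (x # r) L2 = vc B (hc2 B ix (merge B c r L2)) (asc B x (nf B b r) (nf B c L2))"
    using T by (simp add: ix_def)
  have R: "merge B d (x # r) (L2 @ L3) = vc B (hc2 B ix (merge B d r (L2 @ L3))) (asc B x (nf B b r) (nf B d (L2 @ L3)))"
    using T by (simp add: ix_def)
  have "vc B (merge B d ((x # r) @ L2) L3) (hc2 B (merge B c (x # r) L2) (i2 B (nf B d L3)))
     = vc B (hc2 B ix (merge B d (r @ L2) L3)) (vc B (vc B (asc B x (nf B c (r @ L2)) (nf B d L3)) (hc2 B (hc2 B ix (merge B c r L2)) (i2 B (nf B d L3))))
         (hc2 B (asc B x (nf B b r) (nf B c L2)) (i2 B (nf B d L3))))"
    unfolding L L2 using T by (simp add: vc_assoc hc2_vc_left)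
  also have "\<dots> = vc B (hc2 B ix (merge B d (r @ L2) L3)) (vc B (vc B (hc2 B ix (hc2 B (merge B c r L2) (i2 B (nf B d L3)))) (asc B x (hc B (nf B b r) (nf B c L2)) (nf B d L3)))
         (hc2 B (asc B x (nf B b r) (nf B c L2)) (i2 B (nf B d L3))))"
    using asc_natural[of ix "merge B c r L2" "i2 B (nf B d L3)"] T by simp
  also have "\<dots> = vc B (hc2 B ix (vc B (merge B d (r @ L2) L3) (hc2 B (merge B c r L2) (i2 B (nf B d L3)))))
         (vc B (asc B x (hc B (nf B b r) (nf B c L2)) (nf B d L3)) (hc2 B (asc B x (nf B b r) (nf B c L2)) (i2 B (nf B d L3))))"
    using T by (simp add: vc_assoc hc2_vc_right ix_def)
  also have "\<dots> = vc B (hc2 B ix (vc B (merge B d r (L2 @ L3)) (vc B (hc2 B (i2 B (nf B b r)) (merge B d L2 L3)) (asc B (nf B b r) (nf B c L2) (nf B d L3)))))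
         (vc B (asc B x (hc B (nf B b r) (nf B c L2)) (nf B d L3)) (hc2 B (asc B x (nf B b r) (nf B c L2)) (i2 B (nf B d L3))))"
    using IH by simp
  also have "\<dots> = vc B (hc2 B ix (merge B d r (L2 @ L3))) (vc B (hc2 B ix (hc2 B (i2 B (nf B b r)) (merge B d L2 L3)))
         (vc B (hc2 B ix (asc B (nf B b r) (nf B c L2) (nf B d L3)))
         (vc B (asc B x (hc B (nf B b r) (nf B c L2)) (nf B d L3)) (hc2 B (asc B x (nf B b r) (nf B c L2)) (i2 B (nf B d L3))))))"
    using T by (simp add: vc_assoc hc2_vc_right ix_def)
  also have "\<dots> = vc B (hc2 B ix (merge B d r (L2 @ L3))) (vc B (hc2 B ix (hc2 B (i2 B (nf B b r)) (merge B d L2 L3)))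
         (vc B (asc B x (nf B b r) (hc B (nf B c L2) (nf B d L3))) (asc B (hc B x (nf B b r)) (nf B c L2) (nf B d L3))))"
    using pentagon[of x "nf B b r" "nf B c L2" "nf B d L3"] T by (simp add: ix_def)
  also have "\<dots> = vc B (hc2 B ix (merge B d r (L2 @ L3))) (vc B (vc B (hc2 B ix (hc2 B (i2 B (nf B b r)) (merge B d L2 L3)))
         (asc B x (nf B b r) (hc B (nf B c L2) (nf B d L3)))) (asc B (hc B x (nf B b r)) (nf B c L2) (nf B d L3)))"
    using T by (simp add: vc_assoc ix_def)
  also have "\<dots> = vc B (hc2 B ix (merge B d r (L2 @ L3))) (vc B (vc B (asc B x (nf B b r) (nf B d (L2 @ L3)))
         (hc2 B (hc2 B ix (i2 B (nf B b r))) (merge B d L2 L3))) (asc B (hc B x (nf B b r)) (nf B c L2) (nf B d L3)))"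
    using asc_natural[of ix "i2 B (nf B b r)" "merge B d L2 L3"] T by simp
  also have "\<dots> = vc B (merge B d (x # r) (L2 @ L3)) (vc B (hc2 B (i2 B (nf B b (x # r))) (merge B d L2 L3)) (asc B (nf B b (x # r)) (nf B c L2) (nf B d L3)))"
    unfolding R using T by (simp add: vc_assoc ix_def)
  finally show ?case .
qed

lemma merge_Nil_right: "chain B a L b \<Longrightarrow> merge B b L [] = ru B (nf B b L)"
proof (induction L arbitrary: a)
  case Nil
  then show ?case using unitor_coincidence by simp
next
  case (Cons x r)
  then have r: "chain B (t1 B x) r b" by auto
  have tR: "s1 B (nf B b r) = t1 B x" "t1 B (nf B b r) = b" using nf_endpoints[OF r] by auto
  have "merge B b (x # r) [] = vc B (hc2 B (i2 B x) (ru B (nf B b r))) (asc B x (nf B b r) (un B (t1 B (nf B b r))))"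
    using Cons.IH[OF r] tR by simp
  also have "\<dots> = ru B (hc B x (nf B b r))" using runit_hcomp[of x "nf B b r"] tR by simp
  finally show ?case by simp
qed

lemma canon_dom_cod_iso: "wfw B w \<Longrightarrow> chain B (wsrc B w) (letters w) (wtgt B w) \<and>
   s1 B (iw B w) = wsrc B w \<and> t1 B (iw B w) = wtgt B w \<and>
   d2 B (canon B w) = iw B w \<and> c2 B (canon B w) = nf B (wtgt B w) (letters w) \<and> iso2 B (canon B w)"
proof (induction w)
  case (FE e)
  then show ?case using iso_ru[of e] by simp
next
  case (FU A)
  then show ?case by simp
next
  case (FC u v)
  then have u: "chain B (wsrc B u) (letters u) (wtgt B u)" "s1 B (iw B u) = wsrc B u" "t1 B (iw B u) = wtgt B u"
     "d2 B (canon B u) = iw B u" "c2 B (canon B u) = nf B (wtgt B u) (letters u)" "iso2 B (canon B u)"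
   and v: "chain B (wsrc B v) (letters v) (wtgt B v)" "s1 B (iw B v) = wsrc B v" "t1 B (iw B v) = wtgt B v"
     "d2 B (canon B v) = iw B v" "c2 B (canon B v) = nf B (wtgt B v) (letters v)" "iso2 B (canon B v)"
   and uv: "wtgt B u = wsrc B v" by auto
  have m: "d2 B (merge B (wtgt B v) (letters u) (letters v)) = hc B (nf B (wtgt B u) (letters u)) (nf B (wtgt B v) (letters v))"
     "c2 B (merge B (wtgt B v) (letters u) (letters v)) = nf B (wtgt B v) (letters u @ letters v)"
     "iso2 B (merge B (wtgt B v) (letters u) (letters v))"
    using merge_dom_cod_iso[OF u(1)] v(1) uv by auto
  have nu: "t1 B (nf B (wtgt B u) (letters u)) = wtgt B u" using nf_endpoints[OF u(1)] by auto
  show ?case using u v uv m nu by (auto intro!: iso2_vc iso2_hc2)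
qed

lemma canon_asc: assumes "wfw B u" "wfw B v" "wfw B w" "wtgt B u = wsrc B v" "wtgt B v = wsrc B w"
  shows "vc B (canon B (FC u (FC v w))) (asc B (iw B u) (iw B v) (iw B w)) = canon B (FC (FC u v) w)"
proof -
  note U = canon_dom_cod_iso[OF assms(1)] and V = canon_dom_cod_iso[OF assms(2)] and W = canon_dom_cod_iso[OF assms(3)]
  define Lu where "Lu = letters u"
  define Lv where "Lv = letters v"
  define Lw where "Lw = letters w"
  define a where "a = wsrc B u"
  define b where "b = wsrc B v"
  define c where "c = wsrc B w"
  define d where "d = wtgt B w"
  have ch: "chain B a Lu b" "chain B b Lv c" "chain B c Lw d"
    using U V W assms unfolding Lu_def Lv_def Lw_def a_def b_def c_def d_def by auto
  have tt: "wtgt B u = b" "wtgt B v = c" "wtgt B w = d" "wsrc B u = a" "wsrc B v = b" "wsrc B w = c"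
    using assms unfolding a_def b_def c_def d_def by auto
  have cu: "d2 B (canon B u) = iw B u" "c2 B (canon B u) = nf B b Lu" "s1 B (iw B u) = a" "t1 B (iw B u) = b"
    using U tt unfolding Lu_def by auto
  have cv: "d2 B (canon B v) = iw B v" "c2 B (canon B v) = nf B c Lv" "s1 B (iw B v) = b" "t1 B (iw B v) = c"
    using V tt unfolding Lv_def by auto
  have cw: "d2 B (canon B w) = iw B w" "c2 B (canon B w) = nf B d Lw" "s1 B (iw B w) = c" "t1 B (iw B w) = d"
    using W tt unfolding Lw_def by auto
  have n: "s1 B (nf B b Lu) = a" "t1 B (nf B b Lu) = b" "s1 B (nf B c Lv) = b" "t1 B (nf B c Lv) = c"
    "s1 B (nf B d Lw) = c" "t1 B (nf B d Lw) = d" using nf_endpoints[OF ch(1)] nf_endpoints[OF ch(2)] nf_endpoints[OF ch(3)] by auto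
  have ch2: "chain B a (Lu @ Lv) c" "chain B b (Lv @ Lw) d" using ch by auto
  have n2: "s1 B (nf B c (Lu @ Lv)) = a" "t1 B (nf B c (Lu @ Lv)) = c" "s1 B (nf B d (Lv @ Lw)) = b" "t1 B (nf B d (Lv @ Lw)) = d"
    using nf_endpoints[OF ch2(1)] nf_endpoints[OF ch2(2)] by auto
  have m: "d2 B (merge B c Lu Lv) = hc B (nf B b Lu) (nf B c Lv)" "c2 B (merge B c Lu Lv) = nf B c (Lu @ Lv)"
    "d2 B (merge B d Lv Lw) = hc B (nf B c Lv) (nf B d Lw)" "c2 B (merge B d Lv Lw) = nf B d (Lv @ Lw)"
    "d2 B (merge B d (Lu @ Lv) Lw) = hc B (nf B c (Lu @ Lv)) (nf B d Lw)" "c2 B (merge B d (Lu @ Lv) Lw) = nf B d (Lu @ Lv @ Lw)"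
    "d2 B (merge B d Lu (Lv @ Lw)) = hc B (nf B b Lu) (nf B d (Lv @ Lw))" "c2 B (merge B d Lu (Lv @ Lw)) = nf B d (Lu @ Lv @ Lw)"
    using merge_dom_cod_iso[OF ch(1,2)] merge_dom_cod_iso[OF ch(2,3)] merge_dom_cod_iso[OF ch2(1) ch(3)] merge_dom_cod_iso[OF ch(1) ch2(2)] by auto
  note T = cu cv cw n n2 m
  have "canon B (FC (FC u v) w) = vc B (merge B d (Lu @ Lv) Lw) (hc2 B (vc B (merge B c Lu Lv) (hc2 B (canon B u) (canon B v))) (canon B w))"
    by (simp add: tt Lu_def Lv_def Lw_def)
  also have "\<dots> = vc B (vc B (merge B d (Lu @ Lv) Lw) (hc2 B (merge B c Lu Lv) (i2 B (nf B d Lw)))) (hc2 B (hc2 B (canon B u) (canon B v)) (canon B w))"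
    using T by (simp add: hc2_vc_left vc_assoc)
  also have "\<dots> = vc B (vc B (merge B d Lu (Lv @ Lw)) (vc B (hc2 B (i2 B (nf B b Lu)) (merge B d Lv Lw)) (asc B (nf B b Lu) (nf B c Lv) (nf B d Lw))))
        (hc2 B (hc2 B (canon B u) (canon B v)) (canon B w))"
    using merge_assoc[OF ch] by simp
  also have "\<dots> = vc B (merge B d Lu (Lv @ Lw)) (vc B (hc2 B (i2 B (nf B b Lu)) (merge B d Lv Lw)) (vc B (asc B (nf B b Lu) (nf B c Lv) (nf B d Lw))
        (hc2 B (hc2 B (canon B u) (canon B v)) (canon B w))))"
    using T by (simp add: vc_assoc)
  also have "\<dots> = vc B (merge B d Lu (Lv @ Lw)) (vc B (hc2 B (i2 B (nf B b Lu)) (merge B d Lv Lw)) (vc B (hc2 B (canon B u) (hc2 B (canon B v) (canon B w)))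
        (asc B (iw B u) (iw B v) (iw B w))))"
    using asc_natural[of "canon B u" "canon B v" "canon B w"] T by simp
  also have "\<dots> = vc B (vc B (merge B d Lu (Lv @ Lw)) (hc2 B (canon B u) (vc B (merge B d Lv Lw) (hc2 B (canon B v) (canon B w))))) (asc B (iw B u) (iw B v) (iw B w))"
    using T by (simp add: hc2_vc_right vc_assoc)
  also have "\<dots> = vc B (canon B (FC u (FC v w))) (asc B (iw B u) (iw B v) (iw B w))"
    by (simp add: tt Lu_def Lv_def Lw_def)
  finally show ?thesis ..
qed

lemma canon_lu: assumes "wfw B w"
  shows "vc B (canon B w) (lu B (iw B w)) = canon B (FC (FU (wsrc B w)) w)"
proof -
  note W = canon_dom_cod_iso[OF assms]
  have "canon B (FC (FU (wsrc B w)) w) = vc B (lu B (c2 B (canon B w))) (hc2 B (i2 B (un B (s1 B (d2 B (canon B w))))) (canon B w))"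
    using W by simp
  also have "\<dots> = vc B (canon B w) (lu B (iw B w))" using lu_natural[of "canon B w"] W by simp
  finally show ?thesis ..
qed

lemma canon_ru: assumes "wfw B w"
  shows "vc B (canon B w) (ru B (iw B w)) = canon B (FC w (FU (wtgt B w)))"
proof -
  note W = canon_dom_cod_iso[OF assms]
  have "canon B (FC w (FU (wtgt B w))) = vc B (ru B (c2 B (canon B w))) (hc2 B (canon B w) (i2 B (un B (t1 B (d2 B (canon B w))))))"
    using W merge_Nil_right[of "wsrc B w" "letters w" "wtgt B w"] by simp
  also have "\<dots> = vc B (canon B w) (ru B (iw B w))" using ru_natural[of "canon B w"] W by simp
  finally show ?thesis ..
qed

lemma canon_hc2:
  assumes u: "wfw B u" "wfw B u'" and v: "wfw B v" "wfw B v'"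
    and ends: "wtgt B u = wsrc B v" "wtgt B u' = wtgt B u" "wsrc B v' = wsrc B v" "wtgt B v' = wtgt B v"
    and letters: "letters u' = letters u" "letters v' = letters v"
    and f: "d2 B f = iw B u" "c2 B f = iw B u'" "vc B (canon B u') f = canon B u"
    and g: "d2 B g = iw B v" "c2 B g = iw B v'" "vc B (canon B v') g = canon B v"
  shows "vc B (canon B (FC u' v')) (hc2 B f g) = canon B (FC u v)"
proof -
  note U = canon_dom_cod_iso[OF u(1)] and U' = canon_dom_cod_iso[OF u(2)]
  note V = canon_dom_cod_iso[OF v(1)] and V' = canon_dom_cod_iso[OF v(2)]
  define m where "m = merge B (wtgt B v) (letters u) (letters v)"
  have m: "d2 B m = hc B (nf B (wtgt B u) (letters u)) (nf B (wtgt B v) (letters v))"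
    unfolding m_def using merge_dom_cod_iso[of "wsrc B u" "letters u" "wtgt B u"] U V ends by auto
  have "vc B (canon B (FC u' v')) (hc2 B f g) = vc B (vc B m (hc2 B (canon B u') (canon B v'))) (hc2 B f g)"
    unfolding m_def using ends letters by simp
  also have "\<dots> = vc B m (vc B (hc2 B (canon B u') (canon B v')) (hc2 B f g))"
    using U U' V V' ends letters f g m by (intro vc_assoc) auto
  also have "\<dots> = vc B m (hc2 B (canon B u) (canon B v))"
    using interchange[of f "canon B u'" g "canon B v'"] U V U' V' ends f g by simp
  finally show ?thesis unfolding m_def by simp
qed

lemma canon_natural: "wf2 B f \<Longrightarrow> wfw B (fdom B f) \<and> wfw B (fcod B f) \<and>
   wsrc B (fcod B f) = wsrc B (fdom B f) \<and> wtgt B (fcod B f) = wtgt B (fdom B f) \<and>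
   letters (fcod B f) = letters (fdom B f) \<and>
   d2 B (i2c B f) = iw B (fdom B f) \<and> c2 B (i2c B f) = iw B (fcod B f) \<and>
   vc B (canon B (fcod B f)) (i2c B f) = canon B (fdom B f)"
proof (induction f)
  case (F2Id w)
  then show ?case using canon_dom_cod_iso[of w] by simp
next
  case (F2As u v w)
  then have a: "wfw B u" "wfw B v" "wfw B w" "wtgt B u = wsrc B v" "wtgt B v = wsrc B w" by auto
  show ?case using a canon_asc[OF a] canon_dom_cod_iso[OF a(1)] canon_dom_cod_iso[OF a(2)]
      canon_dom_cod_iso[OF a(3)] by simp
next
  case (F2AsI u v w)
  then have a: "wfw B u" "wfw B v" "wfw B w" "wtgt B u = wsrc B v" "wtgt B v = wsrc B w" by auto
  note W = canon_dom_cod_iso[OF a(1)] canon_dom_cod_iso[OF a(2)] canon_dom_cod_iso[OF a(3)]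
  have iso: "iso2 B (asc B (iw B u) (iw B v) (iw B w))" using W a by (intro iso_asc) auto
  have "vc B (canon B (FC (FC u v) w)) (inv2 B (asc B (iw B u) (iw B v) (iw B w))) = canon B (FC u (FC v w))"
    by (rule vc_inv2_eq[OF iso _ canon_asc[OF a]]) (use W a canon_dom_cod_iso[of "FC u (FC v w)"] in simp)
  then show ?case using a W iso by simp
next
  case (F2Lu w)
  then show ?case using canon_lu canon_dom_cod_iso[of w] by simp
next
  case (F2LuI w)
  then have a: "wfw B w" by simp
  note W = canon_dom_cod_iso[OF a]
  have "vc B (canon B (FC (FU (wsrc B w)) w)) (inv2 B (lu B (iw B w))) = canon B w"
    by (rule vc_inv2_eq[OF iso_lu _ canon_lu[OF a]]) (use W in simp)
  then show ?case using a W iso_lu[of "iw B w"] by simp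
next
  case (F2Ru w)
  then show ?case using canon_ru canon_dom_cod_iso[of w] by simp
next
  case (F2RuI w)
  then have a: "wfw B w" by simp
  note W = canon_dom_cod_iso[OF a]
  have "vc B (canon B (FC w (FU (wtgt B w)))) (inv2 B (ru B (iw B w))) = canon B w"
    by (rule vc_inv2_eq[OF iso_ru _ canon_ru[OF a]]) (use W in simp)
  then show ?case using a W iso_ru[of "iw B w"] by simp
next
  case (F2H f g)
  then have wf: "wf2 B f" "wf2 B g" "wtgt B (fdom B f) = wsrc B (fdom B g)" by auto
  note F = F2H.IH(1)[OF wf(1)] and G = F2H.IH(2)[OF wf(2)]
  have "vc B (canon B (FC (fcod B f) (fcod B g))) (hc2 B (i2c B f) (i2c B g)) = canon B (FC (fdom B f) (fdom B g))"
    using F G wf(3) by (intro canon_hc2) auto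
  moreover have "t1 B (iw B (fdom B f)) = s1 B (iw B (fdom B g))"
    using canon_dom_cod_iso F G wf(3) by auto
  ultimately show ?case using wf F G by simp
next
  case (F2V g f)
  then have wf: "wf2 B f" "wf2 B g" "fcod B f = fdom B g" by auto
  note F = F2V.IH(2)[OF wf(1)] and G = F2V.IH(1)[OF wf(2)]
  have "vc B (canon B (fcod B g)) (vc B (i2c B g) (i2c B f)) = vc B (vc B (canon B (fcod B g)) (i2c B g)) (i2c B f)"
    using F G wf canon_dom_cod_iso[of "fcod B g"] by (intro vc_assoc[symmetric]) auto
  then show ?case using wf F G by simp
qed

end

section \<open>Rotating normal forms\<close>

fun start :: "('o,'a,'b) bicat \<Rightarrow> 'o \<Rightarrow> 'a list \<Rightarrow> 'o" where
  "start B A [] = A"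
| "start B A (x # r) = s1 B x"

text \<open>The canonical isomorphism nf L \<odot> x \<Rightarrow> nf (L @ [x]); rot_nf moves the first letter of a
  normal form to the back with a rotator and renormalises with it.\<close>

definition snoc_merge :: "('o,'a,'b) bicat \<Rightarrow> 'o \<Rightarrow> 'a list \<Rightarrow> 'a \<Rightarrow> 'b" where
  "snoc_merge B a L x = vc B (merge B (t1 B x) L [x]) (hc2 B (i2 B (nf B a L)) (inv2 B (ru B x)))"

fun rot_nf :: "('o,'a,'b) bicat \<Rightarrow> ('a,'b,'t,'m) shadow \<Rightarrow> 'o \<Rightarrow> 'a list \<Rightarrow> 'm" where
  "rot_nf B S A [] = Tid S (shO S (un B A))"
| "rot_nf B S A (x # r) = Tcomp S (shM S (snoc_merge B A r x)) (rot S x (nf B A r))"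

fun rot_nf_pow :: "('o,'a,'b) bicat \<Rightarrow> ('a,'b,'t,'m) shadow \<Rightarrow> 'o \<Rightarrow> 'a list \<Rightarrow> nat \<Rightarrow> 'm" where
  "rot_nf_pow B S A L 0 = Tid S (shO S (nf B A L))"
| "rot_nf_pow B S A L (Suc k) = Tcomp S (rot_nf B S (start B A (rotate k L)) (rotate k L)) (rot_nf_pow B S A L k)"

lemma start_start: "length L1 = length L2 \<Longrightarrow> start B (start B A L1) L2 = start B A L2"
  by (cases L1; cases L2) auto

lemma start_chain: "chain B A L A \<Longrightarrow> start B A L = A"
  by (cases L) auto

lemma chain_rotate1: "chain B A L A \<Longrightarrow> chain B (start B A (rotate1 L)) (rotate1 L) (start B A (rotate1 L))"
proof (cases L)
  case (Cons x r)
  assume "chain B A L A"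
  then have "s1 B x = A" "chain B (t1 B x) r A" using Cons by auto
  moreover have "start B A (r @ [x]) = t1 B x" using \<open>chain B (t1 B x) r A\<close> \<open>s1 B x = A\<close> by (cases r) auto
  ultimately show ?thesis using Cons by auto
qed auto

lemma chain_rotate: "chain B A L A \<Longrightarrow> chain B (start B A (rotate k L)) (rotate k L) (start B A (rotate k L))"
proof (induction k)
  case 0
  then show ?case using start_chain[OF 0] by simp
next
  case (Suc k)
  have "chain B (start B (start B A (rotate k L)) (rotate1 (rotate k L))) (rotate1 (rotate k L)) (start B (start B A (rotate k L)) (rotate1 (rotate k L)))"
    by (rule chain_rotate1[OF Suc.IH[OF Suc.prems]])
  moreover have "start B (start B A (rotate k L)) (rotate1 (rotate k L)) = start B A (rotate1 (rotate k L))"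
    by (rule start_start) simp
  ultimately show ?case by simp
qed

lemma start_chain_eqI: "chain B c L c \<Longrightarrow> (L = [] \<Longrightarrow> A = c) \<Longrightarrow> start B A L = c"
  by (cases L) auto

context shadowed_bicat
begin

lemma merge_singleton: assumes "chain B (t1 B x) L b"
  shows "merge B b [x] L = hc2 B (ru B x) (i2 B (nf B b L))"
proof -
  have N: "s1 B (nf B b L) = t1 B x" "t1 B (nf B b L) = b" using nf_endpoints[OF assms] by auto
  have "merge B b [x] L = vc B (hc2 B (i2 B x) (lu B (nf B b L))) (asc B x (un B (t1 B x)) (nf B b L))"
    using N by simp
  also have "\<dots> = hc2 B (ru B x) (i2 B (nf B b L))" using triangle[of x "nf B b L"] N by simp
  finally show ?thesis .
qed

lemma snoc_merge_dom_cod: assumes "chain B b L a" "s1 B x = a"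
  shows "d2 B (snoc_merge B a L x) = hc B (nf B a L) x"
    "c2 B (snoc_merge B a L x) = nf B (t1 B x) (L @ [x])"
proof -
  have N: "s1 B (nf B a L) = b" "t1 B (nf B a L) = a" using nf_endpoints[OF assms(1)] by auto
  have "chain B a [x] (t1 B x)" using assms(2) by simp
  note M = merge_dom_cod_iso[OF assms(1) this]
  show "d2 B (snoc_merge B a L x) = hc B (nf B a L) x"
    "c2 B (snoc_merge B a L x) = nf B (t1 B x) (L @ [x])"
    unfolding snoc_merge_def using M N assms(2) iso_ru[of x] by auto
qed

lemma rot_nf_dom_cod: assumes "chain B A L A"
  shows "Td S (rot_nf B S A L) = shO S (nf B A L) \<and> Tc S (rot_nf B S A L) = shO S (nf B (start B A (rotate1 L)) (rotate1 L))"
proof (cases L)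
  case Nil
  then show ?thesis by simp
next
  case (Cons x r)
  then have x: "s1 B x = A" and r: "chain B (t1 B x) r A" using assms by auto
  have "start B A (r @ [x]) = t1 B x" using r x by (cases r) auto
  then show ?thesis using Cons x nf_endpoints[OF r] snoc_merge_dom_cod[OF r x] by simp
qed

lemma rot_nf_pow_dom_cod: assumes "chain B A L A"
  shows "Td S (rot_nf_pow B S A L k) = shO S (nf B A L) \<and> Tc S (rot_nf_pow B S A L k) = shO S (nf B (start B A (rotate k L)) (rotate k L))"
proof (induction k)
  case 0
  then show ?case using start_chain[OF assms] by simp
next
  case (Suc k)
  have "Td S (rot_nf B S (start B A (rotate k L)) (rotate k L)) = shO S (nf B (start B A (rotate k L)) (rotate k L)) \<and>
     Tc S (rot_nf B S (start B A (rotate k L)) (rotate k L)) = shO S (nf B (start B (start B A (rotate k L)) (rotate1 (rotate k L))) (rotate1 (rotate k L)))"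
    by (rule rot_nf_dom_cod[OF chain_rotate[OF assms]])
  moreover have "start B (start B A (rotate k L)) (rotate1 (rotate k L)) = start B A (rotate1 (rotate k L))"
    by (rule start_start) simp
  ultimately show ?case using Suc by simp
qed

lemma rot_nf_pow_add: assumes "chain B A L A"
  shows "rot_nf_pow B S A L (k + m) = Tcomp S (rot_nf_pow B S (start B A (rotate k L)) (rotate k L) m) (rot_nf_pow B S A L k)"
proof (induction m)
  case 0
  then show ?case using rot_nf_pow_dom_cod[OF assms, of k] by simp
next
  case (Suc m)
  note c = chain_rotate[OF assms, of k]
  have e1: "rotate m (rotate k L) = rotate (k + m) L" by (simp add: rotate_rotate add.commute)
  have e2: "start B (start B A (rotate k L)) (rotate (k + m) L) = start B A (rotate (k + m) L)" by (rule start_start) simp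
  have t1: "Tc S (rot_nf_pow B S A L k) = Td S (rot_nf_pow B S (start B A (rotate k L)) (rotate k L) m)"
    using rot_nf_pow_dom_cod[OF assms, of k] rot_nf_pow_dom_cod[OF c, of m] by simp
  have t2: "Tc S (rot_nf_pow B S (start B A (rotate k L)) (rotate k L) m) = Td S (rot_nf B S (start B A (rotate (k + m) L)) (rotate (k + m) L))"
    using rot_nf_pow_dom_cod[OF c, of m] rot_nf_dom_cod[OF chain_rotate[OF assms, of "k+m"]] e1 e2 by simp
  have "rot_nf_pow B S A L (k + Suc m) = Tcomp S (rot_nf B S (start B A (rotate (k + m) L)) (rotate (k + m) L)) (rot_nf_pow B S A L (k + m))"
    by simp
  also have "\<dots> = Tcomp S (rot_nf B S (start B A (rotate (k + m) L)) (rotate (k + m) L)) (Tcomp S (rot_nf_pow B S (start B A (rotate k L)) (rotate k L) m) (rot_nf_pow B S A L k))"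
    using Suc by simp
  also have "\<dots> = Tcomp S (Tcomp S (rot_nf B S (start B A (rotate (k + m) L)) (rotate (k + m) L)) (rot_nf_pow B S (start B A (rotate k L)) (rotate k L) m)) (rot_nf_pow B S A L k)"
    using t1 t2 by (intro Tcomp_assoc[symmetric]) auto
  also have "\<dots> = Tcomp S (rot_nf_pow B S (start B A (rotate k L)) (rotate k L) (Suc m)) (rot_nf_pow B S A L k)"
    using e1 e2 by simp
  finally show ?case .
qed

lemma rot_nf_pow_Nil: "rot_nf_pow B S A [] k = Tid S (shO S (un B A))"
  by (induction k) auto

lemma merge_snoc_cons: assumes r: "chain B t r b" and V: "chain B b V a" and x: "s1 B x = a" "t1 B x = t"
  shows "vc B (merge B b (V @ [x]) r) (hc2 B (snoc_merge B a V x) (i2 B (nf B b r)))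
       = vc B (merge B b V (x # r)) (asc B (nf B a V) x (nf B b r))"
proof -
  define R where "R = nf B b r"
  define NV where "NV = nf B a V"
  define I where "I = un B t"
  define ri where "ri = inv2 B (ru B x)"
  have cx: "chain B a [x] t" using x by simp
  have cxr: "chain B a (x # r) b" using x r by simp
  have cVx: "chain B b (V @ [x]) t" using V cx by auto
  have tR: "s1 B R = t" "t1 B R = b" using nf_endpoints[OF r] unfolding R_def by auto
  have tV: "s1 B NV = b" "t1 B NV = a" using nf_endpoints[OF V] unfolding NV_def by auto
  have tI: "s1 B I = t" "t1 B I = t" "un B t = I" unfolding I_def by auto
  have ri: "iso2 B (ru B x)" "d2 B ri = x" "c2 B ri = hc B x I" unfolding ri_def I_def using iso_ru[of x] x by auto
  have Nx: "nf B t [x] = hc B x I" unfolding I_def by simp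
  have m1: "d2 B (merge B t V [x]) = hc B NV (hc B x I)" "c2 B (merge B t V [x]) = nf B t (V @ [x])"
    using merge_dom_cod_iso[OF V cx] Nx unfolding NV_def by auto
  have m2: "d2 B (merge B b (V @ [x]) r) = hc B (nf B t (V @ [x])) R" "c2 B (merge B b (V @ [x]) r) = nf B b (V @ [x] @ r)"
    using merge_dom_cod_iso[OF cVx r] unfolding R_def by auto
  have m3: "d2 B (merge B b V (x # r)) = hc B NV (hc B x R)" "c2 B (merge B b V (x # r)) = nf B b (V @ x # r)"
    using merge_dom_cod_iso[OF V cxr] unfolding R_def NV_def by auto
  have tVx: "s1 B (nf B t (V @ [x])) = b" "t1 B (nf B t (V @ [x])) = t" using nf_endpoints[OF cVx] by auto
  have H: "snoc_merge B a V x = vc B (merge B t V [x]) (hc2 B (i2 B NV) ri)"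
    unfolding snoc_merge_def NV_def ri_def using x by simp
  note T = tR tV tI ri m1 m2 m3 tVx x
  have "vc B (merge B b (V @ [x]) r) (hc2 B (vc B (merge B t V [x]) (hc2 B (i2 B NV) ri)) (i2 B R))
      = vc B (vc B (merge B b (V @ [x]) r) (hc2 B (merge B t V [x]) (i2 B R))) (hc2 B (hc2 B (i2 B NV) ri) (i2 B R))"
    using T by (simp add: hc2_vc_left vc_assoc)
  also have "\<dots> = vc B (vc B (merge B b V (x # r)) (vc B (hc2 B (i2 B NV) (hc2 B (ru B x) (i2 B R))) (asc B NV (hc B x I) R)))
      (hc2 B (hc2 B (i2 B NV) ri) (i2 B R))"
    using merge_assoc[OF V cx r] merge_singleton[of x r b] r x Nx unfolding R_def NV_def by simp
  also have "\<dots> = vc B (merge B b V (x # r)) (vc B (hc2 B (i2 B NV) (hc2 B (ru B x) (i2 B R)))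
      (vc B (hc2 B (i2 B NV) (hc2 B ri (i2 B R))) (asc B NV x R)))"
    using asc_natural[of "i2 B NV" ri "i2 B R"] T by (simp add: vc_assoc)
  also have "\<dots> = vc B (merge B b V (x # r)) (vc B (hc2 B (i2 B NV) (hc2 B (vc B (ru B x) ri) (i2 B R))) (asc B NV x R))"
    using T by (simp add: vc_assoc[symmetric] hc2_vc_right hc2_vc_left)
  also have "\<dots> = vc B (merge B b V (x # r)) (asc B NV x R)"
    using T unfolding ri_def by simp
  finally show ?thesis unfolding H R_def NV_def ri_def .
qed

lemma snoc_merge_assoc: assumes r: "chain B t r b" and V: "chain B b V a" and x: "s1 B x = a" "t1 B x = t"
  shows "vc B (snoc_merge B a (r @ V) x) (hc2 B (merge B a r V) (i2 B x))
       = vc B (merge B t r (V @ [x])) (vc B (hc2 B (i2 B (nf B b r)) (snoc_merge B a V x)) (asc B (nf B b r) (nf B a V) x))"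
proof -
  define R where "R = nf B b r"
  define NV where "NV = nf B a V"
  define NrV where "NrV = nf B a (r @ V)"
  define ri where "ri = inv2 B (ru B x)"
  define m where "m = merge B a r V"
  have cx: "chain B a [x] t" using x by simp
  have crV: "chain B t (r @ V) a" using r V by auto
  have cVx: "chain B b (V @ [x]) t" using V cx by auto
  have tR: "s1 B R = t" "t1 B R = b" using nf_endpoints[OF r] unfolding R_def by auto
  have tV: "s1 B NV = b" "t1 B NV = a" using nf_endpoints[OF V] unfolding NV_def by auto
  have trV: "s1 B NrV = t" "t1 B NrV = a" using nf_endpoints[OF crV] unfolding NrV_def by auto
  have ri: "iso2 B (ru B x)" "d2 B ri = x" "c2 B ri = hc B x (un B t)" unfolding ri_def using iso_ru[of x] x by auto
  have Nx: "nf B t [x] = hc B x (un B t)" by simp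
  have m: "d2 B m = hc B R NV" "c2 B m = NrV" using merge_dom_cod_iso[OF r V] unfolding m_def R_def NV_def NrV_def by auto
  have m1: "d2 B (merge B t V [x]) = hc B NV (hc B x (un B t))"
    using merge_dom_cod_iso[OF V cx] Nx unfolding NV_def by auto
  have m2: "d2 B (merge B t (r @ V) [x]) = hc B NrV (hc B x (un B t))"
    using merge_dom_cod_iso[OF crV cx] Nx unfolding NrV_def by auto
  have m3: "d2 B (merge B t r (V @ [x])) = hc B R (nf B t (V @ [x]))" "c2 B (merge B t r (V @ [x])) = nf B t (r @ V @ [x])"
    using merge_dom_cod_iso[OF r cVx] unfolding R_def by auto
  have tVx: "s1 B (nf B t (V @ [x])) = b" "t1 B (nf B t (V @ [x])) = t" using nf_endpoints[OF cVx] by auto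
  have G: "snoc_merge B a (r @ V) x = vc B (merge B t (r @ V) [x]) (hc2 B (i2 B NrV) ri)"
    and H: "snoc_merge B a V x = vc B (merge B t V [x]) (hc2 B (i2 B NV) ri)"
    unfolding snoc_merge_def NrV_def NV_def ri_def using x by simp_all
  note T = tR tV trV ri m m1 m2 m3 tVx x merge_dom_cod_iso[OF V cx]
  have "vc B (vc B (merge B t (r @ V) [x]) (hc2 B (i2 B NrV) ri)) (hc2 B m (i2 B x))
      = vc B (merge B t (r @ V) [x]) (vc B (hc2 B (i2 B NrV) ri) (hc2 B m (i2 B x)))"
    using T by (simp add: vc_assoc)
  also have "\<dots> = vc B (vc B (merge B t (r @ V) [x]) (hc2 B m (i2 B (hc B x (un B t))))) (hc2 B (i2 B (hc B R NV)) ri)"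
    using whiskers_commute[of m ri] T by (simp add: vc_assoc)
  also have "\<dots> = vc B (vc B (merge B t r (V @ [x])) (vc B (hc2 B (i2 B R) (merge B t V [x])) (asc B R NV (hc B x (un B t)))))
      (hc2 B (i2 B (hc B R NV)) ri)"
    using merge_assoc[OF r V cx] Nx unfolding m_def R_def NV_def by simp
  also have "\<dots> = vc B (merge B t r (V @ [x])) (vc B (hc2 B (i2 B R) (merge B t V [x]))
      (vc B (hc2 B (i2 B R) (hc2 B (i2 B NV) ri)) (asc B R NV x)))"
    using asc_natural[of "i2 B R" "i2 B NV" ri] T by (simp add: vc_assoc)
  also have "\<dots> = vc B (merge B t r (V @ [x])) (vc B (hc2 B (i2 B R) (vc B (merge B t V [x]) (hc2 B (i2 B NV) ri))) (asc B R NV x))"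
    using T by (simp add: vc_assoc[symmetric] hc2_vc_right)
  finally show ?thesis unfolding G H R_def NV_def NrV_def ri_def m_def .
qed

lemma rot_asc_rot:
  assumes "t1 B X = s1 B Y" "t1 B Y = s1 B Z" "t1 B Z = s1 B X"
  shows "Tcomp S (rot S Y (hc B Z X)) (Tcomp S (shM S (asc B Y Z X)) (Tcomp S (rot S X (hc B Y Z)) (shM S (asc B X Y Z))))
       = Tcomp S (shM S (inv2 B (asc B Z X Y))) (rot S (hc B X Y) Z)"
proof -
  have iso: "iso2 B (asc B Z X Y)" using assms by (intro iso_asc) auto
  have "Tcomp S (rot S Y (hc B Z X)) (Tcomp S (shM S (asc B Y Z X)) (Tcomp S (rot S X (hc B Y Z)) (shM S (asc B X Y Z))))
      = Tcomp S (rot S Y (hc B Z X)) (Tcomp S (rot S (hc B Z X) Y) (Tcomp S (shM S (inv2 B (asc B Z X Y))) (rot S (hc B X Y) Z)))"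
    using hexagon[OF assms] by simp
  also have "\<dots> = Tcomp S (Tcomp S (rot S Y (hc B Z X)) (rot S (hc B Z X) Y)) (Tcomp S (shM S (inv2 B (asc B Z X Y))) (rot S (hc B X Y) Z))"
    using assms iso by (intro Tcomp_assoc[symmetric]) auto
  also have "\<dots> = Tcomp S (shM S (inv2 B (asc B Z X Y))) (rot S (hc B X Y) Z)"
    using rot_rot[of "hc B Z X" Y] assms iso by simp
  finally show ?thesis .
qed

lemma rot_nf_pow_Suc_Cons: assumes "chain B a (x # L) a"
  shows "rot_nf_pow B S a (x # L) (Suc k) = Tcomp S (rot_nf_pow B S (t1 B x) (L @ [x]) k) (rot_nf B S a (x # L))"
proof -
  have x: "s1 B x = a" using assms by simp
  have "start B a (rotate 1 (x # L)) = t1 B x" using assms by (cases L) auto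
  moreover have "rot_nf_pow B S a (x # L) 1 = rot_nf B S a (x # L)" using rot_nf_dom_cod[OF assms] x by simp
  ultimately show ?thesis using rot_nf_pow_add[OF assms, of 1 k] by simp
qed

text \<open>Induction on U: splitting off the first letter of U costs one rotation step, and the hexagon
  (in the form rot_asc_rot) recombines the remaining rotators.\<close>

lemma merge_rot_eq_rot_nf_pow: "chain B a U b \<Longrightarrow> chain B b V a \<Longrightarrow>
  Tcomp S (shM S (merge B b V U)) (rot S (nf B b U) (nf B a V)) = Tcomp S (rot_nf_pow B S a (U @ V) (length U)) (shM S (merge B a U V))"
proof (induction U arbitrary: a V)
  case Nil
  then have ab: "a = b" and tV: "s1 B (nf B a V) = a" "t1 B (nf B a V) = a" using nf_endpoints[of a V a] by auto
  have "Tcomp S (shM S (ru B (nf B a V))) (rot S (un B a) (nf B a V))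
      = Tcomp S (Tcomp S (shM S (lu B (nf B a V))) (rot S (nf B a V) (un B a))) (rot S (un B a) (nf B a V))"
    using rot_unit[of "nf B a V"] tV by simp
  also have "\<dots> = Tcomp S (shM S (lu B (nf B a V))) (Tcomp S (rot S (nf B a V) (un B a)) (rot S (un B a) (nf B a V)))"
    using tV by (intro Tcomp_assoc) auto
  also have "\<dots> = shM S (lu B (nf B a V))" using rot_rot[of "un B a" "nf B a V"] tV by simp
  finally show ?case using merge_Nil_right[of a V a] Nil ab tV by simp
next
  case (Cons x r)
  define t where "t = t1 B x"
  have x: "s1 B x = a" "t1 B x = t" and r: "chain B t r b" and V: "chain B b V a"
    using Cons.prems unfolding t_def by auto
  define R where "R = nf B b r"
  define NV where "NV = nf B a V"
  define NrV where "NrV = nf B a (r @ V)"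
  define m where "m = merge B a r V"
  define G where "G = snoc_merge B a (r @ V) x"
  define H where "H = snoc_merge B a V x"
  define m' where "m' = merge B t r (V @ [x])"
  define m'' where "m'' = merge B b (V @ [x]) r"
  define \<rho> where "\<rho> = rot_nf_pow B S t (r @ V @ [x]) (length r)"
  have crV: "chain B t (r @ V) a" and cVx: "chain B b (V @ [x]) t" and cxr: "chain B a (x # r) b"
    and cL: "chain B t (r @ V @ [x]) t" using r V x by auto
  have tR: "s1 B R = t" "t1 B R = b" using nf_endpoints[OF r] unfolding R_def by auto
  have tV: "s1 B NV = b" "t1 B NV = a" using nf_endpoints[OF V] unfolding NV_def by auto
  have trV: "s1 B NrV = t" "t1 B NrV = a" using nf_endpoints[OF crV] unfolding NrV_def by auto
  have tVx: "s1 B (nf B t (V @ [x])) = b" "t1 B (nf B t (V @ [x])) = t" using nf_endpoints[OF cVx] by auto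
  have tm: "d2 B m = hc B R NV" "c2 B m = NrV" using merge_dom_cod_iso[OF r V] unfolding m_def R_def NV_def NrV_def by auto
  have tG: "d2 B G = hc B NrV x" "c2 B G = nf B t (r @ V @ [x])"
    using snoc_merge_dom_cod[OF crV x(1)] x unfolding G_def NrV_def by auto
  have tH: "d2 B H = hc B NV x" "c2 B H = nf B t (V @ [x])"
    using snoc_merge_dom_cod[OF V x(1)] x unfolding H_def NV_def by auto
  have tm': "d2 B m' = hc B R (nf B t (V @ [x]))" "c2 B m' = nf B t (r @ V @ [x])"
    using merge_dom_cod_iso[OF r cVx] unfolding m'_def R_def by auto
  have tm'': "d2 B m'' = hc B (nf B t (V @ [x])) R" "c2 B m'' = nf B b (V @ x # r)"
    using merge_dom_cod_iso[OF cVx r] unfolding m''_def R_def by auto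
  have tmx: "d2 B (merge B b V (x # r)) = hc B NV (hc B x R)"
    using merge_dom_cod_iso[OF V cxr] unfolding R_def NV_def by auto
  have "rotate (length r) (r @ V @ [x]) = V @ x # r" by (simp add: rotate_append)
  moreover have "chain B b (V @ x # r) b" using V cxr by auto
  ultimately have t\<rho>: "Td S \<rho> = shO S (nf B t (r @ V @ [x]))" "Tc S \<rho> = shO S (nf B b (V @ x # r))"
    using rot_nf_pow_dom_cod[OF cL, of "length r"] start_chain_eqI[of B b "V @ x # r"] unfolding \<rho>_def by auto
  have asc_iso: "iso2 B (asc B NV x R)" using x tR tV by (intro iso_asc) auto
  note T = x tR tV trV tVx tm tG tH tm' tm'' tmx t\<rho> asc_iso
  have IH: "Tcomp S (shM S m'') (rot S R (nf B t (V @ [x]))) = Tcomp S \<rho> (shM S m')"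
    using Cons.IH[OF r cVx] unfolding m''_def R_def \<rho>_def m'_def by simp
  have snoc_assoc: "vc B G (hc2 B m (i2 B x)) = vc B m' (vc B (hc2 B (i2 B R) H) (asc B R NV x))"
    using snoc_merge_assoc[OF r V x] unfolding G_def m_def m'_def H_def R_def NV_def .
  have merge_Cons: "vc B (vc B m'' (hc2 B H (i2 B R))) (inv2 B (asc B NV x R)) = merge B b V (x # r)"
    using merge_snoc_cons[OF r V x] T unfolding m''_def H_def R_def NV_def by (intro vc_inv2_eq) simp_all
  have \<rho>L: "rot_nf_pow B S a (x # r @ V) (Suc (length r)) = Tcomp S \<rho> (rot_nf B S a (x # r @ V))"
  proof -
    have "chain B a (x # r @ V) a" using cxr V by auto
    from rot_nf_pow_Suc_Cons[OF this, of "length r"] show ?thesis unfolding \<rho>_def t_def by simp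
  qed
  have mL: "shM S (merge B a (x # r) V) = Tcomp S (shM S (hc2 B (i2 B x) m)) (shM S (asc B x R NV))"
    using T by (simp add: shM_vc m_def R_def NV_def)
  have lhs: "Tcomp S (rot_nf_pow B S a ((x # r) @ V) (length (x # r))) (shM S (merge B a (x # r) V))
     = Tcomp S (Tcomp S \<rho> (Tcomp S (shM S G) (rot S x NrV))) (Tcomp S (shM S (hc2 B (i2 B x) m)) (shM S (asc B x R NV)))"
    by (simp only: append_Cons length_Cons \<rho>L mL rot_nf.simps G_def NrV_def)
  have "Tcomp S (rot_nf_pow B S a ((x # r) @ V) (length (x # r))) (shM S (merge B a (x # r) V))
     = Tcomp S \<rho> (Tcomp S (shM S G) (Tcomp S (Tcomp S (rot S x NrV) (shM S (hc2 B (i2 B x) m))) (shM S (asc B x R NV))))"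
    unfolding lhs using T by (simp add: Tcomp_assoc)
  also have "\<dots> = Tcomp S \<rho> (Tcomp S (shM S G) (Tcomp S (Tcomp S (shM S (hc2 B m (i2 B x))) (rot S x (hc B R NV))) (shM S (asc B x R NV))))"
    using rot_natural[of "i2 B x" m] T by simp
  also have "\<dots> = Tcomp S \<rho> (Tcomp S (shM S (vc B G (hc2 B m (i2 B x)))) (Tcomp S (rot S x (hc B R NV)) (shM S (asc B x R NV))))"
    using T by (simp add: Tcomp_assoc shM_vc)
  also have "\<dots> = Tcomp S (Tcomp S \<rho> (shM S m')) (Tcomp S (shM S (hc2 B (i2 B R) H)) (Tcomp S (shM S (asc B R NV x)) (Tcomp S (rot S x (hc B R NV)) (shM S (asc B x R NV)))))"
    unfolding snoc_assoc using T by (simp add: Tcomp_assoc shM_vc)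
  also have "\<dots> = Tcomp S (shM S m'') (Tcomp S (Tcomp S (rot S R (nf B t (V @ [x]))) (shM S (hc2 B (i2 B R) H))) (Tcomp S (shM S (asc B R NV x)) (Tcomp S (rot S x (hc B R NV)) (shM S (asc B x R NV)))))"
    unfolding IH[symmetric] using T by (simp add: Tcomp_assoc)
  also have "\<dots> = Tcomp S (shM S m'') (Tcomp S (shM S (hc2 B H (i2 B R))) (Tcomp S (rot S R (hc B NV x)) (Tcomp S (shM S (asc B R NV x)) (Tcomp S (rot S x (hc B R NV)) (shM S (asc B x R NV))))))"
    using rot_natural[of "i2 B R" H] T by (simp add: Tcomp_assoc)
  also have "\<dots> = Tcomp S (shM S m'') (Tcomp S (shM S (hc2 B H (i2 B R))) (Tcomp S (shM S (inv2 B (asc B NV x R))) (rot S (hc B x R) NV)))"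
    using rot_asc_rot[of x R NV] T by simp
  also have "\<dots> = Tcomp S (shM S (merge B b V (x # r))) (rot S (nf B b (x # r)) (nf B a V))"
    using T by (simp add: Tcomp_assoc shM_vc merge_Cons[symmetric] R_def NV_def)
  finally show ?case ..
qed

text \<open>The case V = [] of merge_rot_eq_rot_nf_pow, combined with the unit axiom of the rotator.\<close>

lemma rot_nf_pow_length: assumes c: "chain B a L a" shows "rot_nf_pow B S a L (length L) = Tid S (shO S (nf B a L))"
proof -
  define X where "X = nf B a L"
  have tX: "s1 B X = a" "t1 B X = a" using nf_endpoints[OF c] unfolding X_def by auto
  have g: "Tcomp S (shM S (merge B a [] L)) (rot S (nf B a L) (nf B a [])) = Tcomp S (rot_nf_pow B S a (L @ []) (length L)) (shM S (merge B a L []))"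
    by (rule merge_rot_eq_rot_nf_pow[OF c]) simp
  have e1: "Tcomp S (shM S (lu B X)) (rot S X (un B a)) = shM S (ru B X)" using rot_unit[of X] tX by simp
  have E: "Tcomp S (rot_nf_pow B S a L (length L)) (shM S (ru B X)) = Tcomp S (Tid S (shO S X)) (shM S (ru B X))"
    using g e1 merge_Nil_right[OF c] tX by (simp add: X_def[symmetric])
  have ty: "Td S (rot_nf_pow B S a L (length L)) = shO S X"
    using rot_nf_pow_dom_cod[OF c, of "length L"] unfolding X_def by simp
  have risoX: "iso2 B (ru B X)" by (rule iso_ru)
  have endo: "s1 B (d2 B (ru B X)) = t1 B (d2 B (ru B X))" using tX by simp
  note I = shM_inv2[OF risoX endo]
  show ?thesis unfolding X_def[symmetric]
    by (rule T_iso_cancel_right[OF I(1) I(4) _ _ E]) (use tX ty in simp_all)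
qed

lemma rot_nf_pow_mod: assumes c: "chain B a L a" shows "rot_nf_pow B S a L k = rot_nf_pow B S a L (k mod length L)"
proof (cases "L = []")
  case True
  then show ?thesis by simp
next
  case False
  show ?thesis
  proof (induction k rule: less_induct)
    case (less k)
    show ?case
    proof (cases "k < length L")
      case True
      then show ?thesis by simp
    next
      case long: False
      then obtain m where k: "k = length L + m" by (metis le_add_diff_inverse not_less)
      have "rot_nf_pow B S a L k = Tcomp S (rot_nf_pow B S a L m) (rot_nf_pow B S a L (length L))"
        using rot_nf_pow_add[OF c, of "length L" m] start_chain[OF c] k by simp
      also have "\<dots> = rot_nf_pow B S a L m" using rot_nf_pow_length[OF c] rot_nf_pow_dom_cod[OF c, of m] by simp
      also have "\<dots> = rot_nf_pow B S a L (m mod length L)" using less[of m] k False by simp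
      finally show ?thesis using k by simp
    qed
  qed
qed

end

section \<open>Images of shadow morphisms\<close>

text \<open>The image of f, conjugated by the canonical isomorphisms of its source and target, is the
  k-th power of the rotation of normal forms, and the cyclic permutation of f is rotation by k.\<close>

definition conj_rot_nf_pow :: "('o,'a,'b) bicat \<Rightarrow> ('a,'b,'t,'m) shadow \<Rightarrow> ('o,'a) fsh \<Rightarrow> nat \<Rightarrow> bool" where
  "conj_rot_nf_pow B S f k \<longleftrightarrow>
     letters (scod B f) = rotate k (letters (sdom B f)) \<and>
     wsrc B (scod B f) = start B (wsrc B (sdom B f)) (letters (scod B f)) \<and>
     (\<forall>i < length (letters (sdom B f)).
        cperm f i < length (letters (sdom B f)) \<and> (cperm f i + k) mod length (letters (sdom B f)) = i) \<and>
     Tcomp S (shM S (canon B (scod B f))) (counit_sh B S f) =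
       Tcomp S (rot_nf_pow B S (wsrc B (sdom B f)) (letters (sdom B f)) k) (shM S (canon B (sdom B f)))"

lemma add_mod_cancel_left: "((c::nat) + a) mod n = (c + b) mod n \<Longrightarrow> a mod n = b mod n"
  by (simp add: nat_mod_eq_iff)

lemma aperiodic_rotate_eq: assumes ap: "aperiodic xs" and n: "0 < length xs"
  and e: "rotate a (rotate j xs) = rotate b (rotate j xs)"
  shows "a mod length xs = b mod length xs"
proof -
  define n where "n = length xs"
  define a' where "a' = (a + j) mod n"
  define b' where "b' = (b + j) mod n"
  have ab: "rotate a' xs = rotate b' xs" using e unfolding a'_def b'_def n_def
    by (metis rotate_rotate rotate_conv_mod)
  have lt: "a' < n" "b' < n" using n unfolding a'_def b'_def n_def by auto
  have key: "\<And>p q. p < n \<Longrightarrow> q < n \<Longrightarrow> p < q \<Longrightarrow> rotate p xs = rotate q xs \<Longrightarrow> False"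
  proof -
    fix p q assume p: "p < n" "q < n" "p < q" "rotate p xs = rotate q xs"
    have "rotate (n - q) (rotate p xs) = rotate (n - q) (rotate q xs)" using p by simp
    moreover have "rotate (n - q) (rotate p xs) = rotate (n - q + p) xs" by (simp add: rotate_rotate)
    moreover have "rotate (n - q) (rotate q xs) = rotate n xs" using p by (simp add: rotate_rotate)
    ultimately have "rotate (n - q + p) xs = rotate n xs" by simp
    then have "rotate (n - q + p) xs = xs" unfolding n_def by simp
    moreover have "0 < n - q + p" "n - q + p < length xs" using p unfolding n_def by auto
    ultimately show False using ap unfolding aperiodic_def by blast
  qed
  have "a' = b'"
  proof (rule ccontr)
    assume "a' \<noteq> b'"
    then have "a' < b' \<or> b' < a'" by auto
    then show False using key[of a' b'] key[of b' a'] lt ab by auto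
  qed
  then have "(j + a) mod n = (j + b) mod n" unfolding a'_def b'_def by (simp add: add.commute)
  then show ?thesis using add_mod_cancel_left unfolding n_def by blast
qed

lemma pcomp_wfs: "p \<noteq> [] \<Longrightarrow> (\<forall>f\<in>set p. wfs B f) \<Longrightarrow> (\<forall>i. Suc i < length p \<longrightarrow> scod B (p ! i) = sdom B (p ! Suc i)) \<Longrightarrow>
   wfs B (pcomp p) \<and> sdom B (pcomp p) = sdom B (hd p)"
proof (induction p rule: pcomp.induct)
  case 1
  then show ?case by simp
next
  case (2 f)
  then show ?case by simp
next
  case (3 f g r)
  have h: "\<forall>i. Suc i < length (g # r) \<longrightarrow> scod B ((g # r) ! i) = sdom B ((g # r) ! Suc i)"
  proof (intro allI impI)
    fix i assume "Suc i < length (g # r)"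
    then show "scod B ((g # r) ! i) = sdom B ((g # r) ! Suc i)" using "3.prems"(3)[rule_format, of "Suc i"] by simp
  qed
  have IH: "wfs B (pcomp (g # r)) \<and> sdom B (pcomp (g # r)) = sdom B g" using "3.IH" "3.prems"(2) h by simp
  have "scod B f = sdom B g" using "3.prems"(3)[rule_format, of 0] by simp
  then show ?case using IH "3.prems"(2) by simp
qed

context shadowed_bicat
begin

lemma counit_sh_dom_cod: "wfs B f \<Longrightarrow>
  wfw B (sdom B f) \<and> wsrc B (sdom B f) = wtgt B (sdom B f) \<and>
  wfw B (scod B f) \<and> wsrc B (scod B f) = wtgt B (scod B f) \<and>
  Td S (counit_sh B S f) = shO S (iw B (sdom B f)) \<and> Tc S (counit_sh B S f) = shO S (iw B (scod B f))"
proof (induction f)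
  case (FSh f)
  then show ?case using canon_natural[of f] canon_dom_cod_iso[of "fdom B f"] by auto
next
  case (FRot u v)
  then show ?case using canon_dom_cod_iso[of u] canon_dom_cod_iso[of v] by auto
next
  case (FSC g f)
  then show ?case by auto
qed

lemma conj_rot_nf_pow_FSh: assumes "wfs B (FSh f)" shows "conj_rot_nf_pow B S (FSh f) 0"
proof -
  have wf: "wf2 B f" and en: "wsrc B (fdom B f) = wtgt B (fdom B f)" using assms by auto
  note F = canon_natural[OF wf]
  note Wd = canon_dom_cod_iso[of "fdom B f"] and Wc = canon_dom_cod_iso[of "fcod B f"]
  have "Tcomp S (shM S (canon B (fcod B f))) (shM S (i2c B f)) = shM S (canon B (fdom B f))"
    using shM_vc[of "i2c B f" "canon B (fcod B f)"] F Wd Wc en by simp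
  moreover have "chain B (wsrc B (fdom B f)) (letters (fdom B f)) (wsrc B (fdom B f))" using F Wd en by simp
  note start_chain[OF this]
  ultimately show ?thesis unfolding conj_rot_nf_pow_def using F Wd en by simp
qed

lemma conj_rot_nf_pow_FRot: assumes "wfs B (FRot u v)" shows "conj_rot_nf_pow B S (FRot u v) (length (letters u))"
proof -
  have wu: "wfw B u" and wv: "wfw B v" and uv: "wtgt B u = wsrc B v" "wtgt B v = wsrc B u" using assms by auto
  note U = canon_dom_cod_iso[OF wu] and V = canon_dom_cod_iso[OF wv]
  define a where "a = wsrc B u"
  define b where "b = wtgt B u"
  define Lu where "Lu = letters u"
  define Lv where "Lv = letters v"
  have cu: "chain B a Lu b" and cv: "chain B b Lv a" and cuv: "chain B a (Lu @ Lv) a"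
    using U V uv unfolding a_def b_def Lu_def Lv_def by auto
  have e: "wsrc B u = a" "wtgt B u = b" "wsrc B v = b" "wtgt B v = a" using uv unfolding a_def b_def by auto
  note T = U V e nf_endpoints[OF cu] nf_endpoints[OF cv] merge_dom_cod_iso[OF cv cu] merge_dom_cod_iso[OF cu cv]
  have "Tcomp S (shM S (canon B (FC v u))) (rot S (iw B u) (iw B v))
      = Tcomp S (shM S (merge B b Lv Lu)) (Tcomp S (shM S (hc2 B (canon B v) (canon B u))) (rot S (iw B u) (iw B v)))"
    using T unfolding Lu_def Lv_def by (simp add: shM_vc Tcomp_assoc)
  also have "\<dots> = Tcomp S (shM S (merge B b Lv Lu)) (Tcomp S (rot S (nf B b Lu) (nf B a Lv)) (shM S (hc2 B (canon B u) (canon B v))))"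
    using rot_natural[of "canon B u" "canon B v"] T unfolding Lu_def Lv_def by simp
  also have "\<dots> = Tcomp S (Tcomp S (shM S (merge B b Lv Lu)) (rot S (nf B b Lu) (nf B a Lv))) (shM S (hc2 B (canon B u) (canon B v)))"
    using T unfolding Lu_def Lv_def by (simp add: Tcomp_assoc)
  also have "\<dots> = Tcomp S (Tcomp S (rot_nf_pow B S a (Lu @ Lv) (length Lu)) (shM S (merge B a Lu Lv))) (shM S (hc2 B (canon B u) (canon B v)))"
    using merge_rot_eq_rot_nf_pow[OF cu cv] by simp
  also have "\<dots> = Tcomp S (rot_nf_pow B S a (Lu @ Lv) (length Lu)) (shM S (canon B (FC u v)))"
    using T rot_nf_pow_dom_cod[OF cuv, of "length Lu"] unfolding Lu_def Lv_def by (simp add: shM_vc Tcomp_assoc)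
  finally have eq: "Tcomp S (shM S (canon B (FC v u))) (rot S (iw B u) (iw B v))
    = Tcomp S (rot_nf_pow B S a (Lu @ Lv) (length Lu)) (shM S (canon B (FC u v)))" .
  have "b = start B a (Lv @ Lu)"
    using cu cv by (intro start_chain_eqI[symmetric]) auto
  moreover have "(cperm (FRot u v) i + length Lu) mod length (Lu @ Lv) = i" if "i < length (Lu @ Lv)" for i
  proof (cases "i < length Lu")
    case True
    have "(i + length Lv + length Lu) mod (length Lu + length Lv) = i mod (length Lu + length Lv)"
      by (metis add.assoc add.commute mod_add_self2)
    then show ?thesis using True that unfolding Lu_def Lv_def by simp
  next
    case False
    then show ?thesis using that unfolding Lu_def Lv_def by simp
  qed
  ultimately show ?thesis unfolding conj_rot_nf_pow_def using eq e
    by (auto simp: rotate_append Lu_def Lv_def)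
qed

lemma conj_rot_nf_pow_FSC:
  assumes wf: "wfs B f" "wfs B g" "scod B f = sdom B g"
    and f: "conj_rot_nf_pow B S f kf" and g: "conj_rot_nf_pow B S g kg"
  shows "conj_rot_nf_pow B S (FSC g f) (kf + kg)"
proof -
  define A where "A = wsrc B (sdom B f)"
  define L where "L = letters (sdom B f)"
  define A' where "A' = start B A (rotate kf L)"
  note F = counit_sh_dom_cod[OF wf(1)] and G = counit_sh_dom_cod[OF wf(2)]
  have kf: "letters (scod B f) = rotate kf L" "wsrc B (scod B f) = A'"
    "\<forall>i < length L. cperm f i < length L \<and> (cperm f i + kf) mod length L = i"
    "Tcomp S (shM S (canon B (scod B f))) (counit_sh B S f) = Tcomp S (rot_nf_pow B S A L kf) (shM S (canon B (sdom B f)))"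
    using f unfolding conj_rot_nf_pow_def A_def L_def A'_def by auto
  have kg: "letters (scod B g) = rotate kg (rotate kf L)" "wsrc B (scod B g) = start B A' (letters (scod B g))"
    "\<forall>i < length L. cperm g i < length L \<and> (cperm g i + kg) mod length L = i"
    "Tcomp S (shM S (canon B (scod B g))) (counit_sh B S g) = Tcomp S (rot_nf_pow B S A' (rotate kf L) kg) (shM S (canon B (scod B f)))"
    using g kf wf(3) unfolding conj_rot_nf_pow_def by auto
  have ch: "chain B A L A" using canon_dom_cod_iso[of "sdom B f"] F unfolding A_def L_def by simp
  have chg: "chain B A' (rotate kf L) A'" unfolding A'_def by (rule chain_rotate[OF ch])
  note TT = F G wf(3) canon_dom_cod_iso[of "scod B f"] canon_dom_cod_iso[of "scod B g"] canon_dom_cod_iso[of "sdom B f"]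
    rot_nf_pow_dom_cod[OF ch, of kf] rot_nf_pow_dom_cod[OF chg, of kg] kf(1,2) A_def L_def
  have "Tcomp S (shM S (canon B (scod B g))) (Tcomp S (counit_sh B S g) (counit_sh B S f))
     = Tcomp S (Tcomp S (shM S (canon B (scod B g))) (counit_sh B S g)) (counit_sh B S f)"
    using TT by (intro Tcomp_assoc[symmetric]) auto
  also have "\<dots> = Tcomp S (rot_nf_pow B S A' (rotate kf L) kg) (Tcomp S (shM S (canon B (scod B f))) (counit_sh B S f))"
    unfolding kg(4) using TT A'_def by (intro Tcomp_assoc) auto
  also have "\<dots> = Tcomp S (Tcomp S (rot_nf_pow B S A' (rotate kf L) kg) (rot_nf_pow B S A L kf)) (shM S (canon B (sdom B f)))"
    unfolding kf(4) using TT A'_def by (intro Tcomp_assoc[symmetric]) auto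
  also have "\<dots> = Tcomp S (rot_nf_pow B S A L (kf + kg)) (shM S (canon B (sdom B f)))"
    using rot_nf_pow_add[OF ch, of kf kg] unfolding A'_def by simp
  finally have eq: "Tcomp S (shM S (canon B (scod B g))) (Tcomp S (counit_sh B S g) (counit_sh B S f))
      = Tcomp S (rot_nf_pow B S A L (kf + kg)) (shM S (canon B (sdom B f)))" .
  have "(cperm g (cperm f i) + (kf + kg)) mod length L = i" if i: "i < length L" for i
  proof -
    define j where "j = cperm f i"
    have j: "j < length L" "(j + kf) mod length L = i" using kf(3) i unfolding j_def by auto
    have "(cperm g j + (kf + kg)) mod length L = ((cperm g j + kg) mod length L + kf) mod length L"
      by (metis mod_add_left_eq add.commute add.left_commute)
    also have "\<dots> = i" using kg(3) j by simp
    finally show ?thesis unfolding j_def .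
  qed
  moreover have "letters (scod B g) = rotate (kf + kg) L" using kg(1) by (simp add: rotate_rotate add.commute)
  moreover have "wsrc B (scod B g) = start B A (letters (scod B g))"
    using kg(1,2) start_start[of "rotate kf L" "letters (scod B g)" B A] unfolding A'_def by simp
  ultimately show ?thesis unfolding conj_rot_nf_pow_def using eq kf(3) kg(3) wf(3)
    by (auto simp: A_def L_def)
qed

lemma conj_rot_nf_pow_exists: "wfs B f \<Longrightarrow> \<exists>k. conj_rot_nf_pow B S f k"
proof (induction f)
  case (FSh f)
  then show ?case using conj_rot_nf_pow_FSh by blast
next
  case (FRot u v)
  then show ?case using conj_rot_nf_pow_FRot by blast
next
  case (FSC g f)
  then show ?case using conj_rot_nf_pow_FSC[of f g] by fastforce
qed

lemma counit_sh_eqI: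
  assumes P: "wfs B P" "conj_rot_nf_pow B S P kP" and Q: "wfs B Q" "conj_rot_nf_pow B S Q kQ"
    and parallel: "sdom B P = sdom B Q" "scod B P = scod B Q"
    and k: "letters (sdom B P) \<noteq> [] \<Longrightarrow> kP mod length (letters (sdom B P)) = kQ mod length (letters (sdom B P))"
  shows "counit_sh B S P = counit_sh B S Q"
proof -
  define A where "A = wsrc B (sdom B P)"
  define L where "L = letters (sdom B P)"
  define w where "w = scod B P"
  note DP = counit_sh_dom_cod[OF P(1)] and DQ = counit_sh_dom_cod[OF Q(1)]
  note W = canon_dom_cod_iso[of w]
  have ch: "chain B A L A" using canon_dom_cod_iso[of "sdom B P"] DP unfolding A_def L_def by simp
  have "rot_nf_pow B S A L kP = rot_nf_pow B S A L kQ"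
    using k rot_nf_pow_mod[OF ch, of kP] rot_nf_pow_mod[OF ch, of kQ] rot_nf_pow_Nil
    unfolding L_def by (cases "L = []") (auto simp: L_def)
  then have E: "Tcomp S (shM S (canon B w)) (counit_sh B S P) = Tcomp S (shM S (canon B w)) (counit_sh B S Q)"
    using P(2) Q(2) parallel unfolding conj_rot_nf_pow_def A_def L_def w_def by simp
  have iso: "iso2 B (canon B w)" and en: "s1 B (d2 B (canon B w)) = t1 B (d2 B (canon B w))"
    using W DP unfolding w_def by auto
  note I = shM_inv2[OF iso en]
  show ?thesis
    by (rule T_iso_cancel_left[OF I(2) I(3) _ _ E]) (use DP DQ W en parallel in \<open>simp_all add: w_def\<close>)
qed

lemma parallel_paths_wfs:
  assumes "is_sh_diagram B D" "parallel_paths B D p q"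
  shows "wfs B (pcomp p)" "wfs B (pcomp q)" "sdom B (pcomp p) = sdom B (hd p)" "hd p \<in> D"
    "sdom B (pcomp p) = sdom B (pcomp q)" "scod B (pcomp p) = scod B (pcomp q)"
proof -
  have p: "is_path B D p" and q: "is_path B D q" using assms(2) unfolding parallel_paths_def by auto
  show "wfs B (pcomp p)" "sdom B (pcomp p) = sdom B (hd p)"
    using pcomp_wfs[of p B] p assms(1) unfolding is_path_def is_sh_diagram_def by auto
  show "wfs B (pcomp q)" using pcomp_wfs[of q B] q assms(1) unfolding is_path_def is_sh_diagram_def by auto
  show "hd p \<in> D" using p unfolding is_path_def by (cases p) auto
  show "sdom B (pcomp p) = sdom B (pcomp q)" "scod B (pcomp p) = scod B (pcomp q)"
    using assms(2) unfolding parallel_paths_def by auto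
qed

lemma image_commutes_if_same_cperm:
  assumes D: "is_sh_diagram B D" and same: "\<forall>p q. parallel_paths B D p q \<longrightarrow> same_cperm B (pcomp p) (pcomp q)"
  shows "image_commutes B S D"
  unfolding image_commutes_def
proof (intro allI impI)
  fix p q assume pq: "parallel_paths B D p q"
  note W = parallel_paths_wfs[OF D pq]
  obtain kP kQ where k: "conj_rot_nf_pow B S (pcomp p) kP" "conj_rot_nf_pow B S (pcomp q) kQ"
    using conj_rot_nf_pow_exists W by blast
  show "counit_sh B S (pcomp p) = counit_sh B S (pcomp q)"
  proof (rule counit_sh_eqI[OF W(1) k(1) W(2) k(2) W(5,6)])
    define n where "n = length (letters (sdom B (pcomp p)))"
    assume "letters (sdom B (pcomp p)) \<noteq> []"
    then have n: "0 < n" unfolding n_def by simp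
    have "\<forall>i < n. (cperm (pcomp p) i + kP) mod n = i" "\<forall>i < n. (cperm (pcomp q) i + kQ) mod n = i"
      using k W(5) unfolding conj_rot_nf_pow_def n_def by auto
    then have "(cperm (pcomp p) 0 + kP) mod n = 0" "(cperm (pcomp q) 0 + kQ) mod n = 0" using n by auto
    moreover have "cperm (pcomp p) 0 = cperm (pcomp q) 0"
      using same pq n unfolding same_cperm_def n_def by blast
    ultimately have "(cperm (pcomp p) 0 + kP) mod n = (cperm (pcomp p) 0 + kQ) mod n" by simp
    then show "kP mod n = kQ mod n" by (rule add_mod_cancel_left)
  qed
qed

lemma image_commutes_if_aperiodic:
  assumes ap: "aperiodic xs" and D: "is_sh_diagram B D" and on: "diagram_on B xs D"
  shows "image_commutes B S D"
  unfolding image_commutes_def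
proof (intro allI impI)
  fix p q assume pq: "parallel_paths B D p q"
  note W = parallel_paths_wfs[OF D pq]
  obtain j where j: "letters (sdom B (pcomp p)) = rotate j xs" using on W(3,4) unfolding diagram_on_def by metis
  obtain kP kQ where k: "conj_rot_nf_pow B S (pcomp p) kP" "conj_rot_nf_pow B S (pcomp q) kQ"
    using conj_rot_nf_pow_exists W by blast
  show "counit_sh B S (pcomp p) = counit_sh B S (pcomp q)"
  proof (rule counit_sh_eqI[OF W(1) k(1) W(2) k(2) W(5,6)])
    assume "letters (sdom B (pcomp p)) \<noteq> []"
    then have n: "0 < length xs" using j by simp
    have "letters (scod B (pcomp p)) = rotate kP (letters (sdom B (pcomp p)))"
      "letters (scod B (pcomp q)) = rotate kQ (letters (sdom B (pcomp q)))"
      using k unfolding conj_rot_nf_pow_def by blast+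
    then have "rotate kP (rotate j xs) = rotate kQ (rotate j xs)" using W(5,6) j by metis
    then have "kP mod length xs = kQ mod length xs" by (rule aperiodic_rotate_eq[OF ap n])
    then show "kP mod length (letters (sdom B (pcomp p))) = kQ mod length (letters (sdom B (pcomp p)))"
      unfolding j by simp
  qed
qed

end

theorem mainTheorem4:
  fixes B :: "('o,'a,'b) bicat" and S :: "('a,'b,'t,'m) shadow"
  assumes "is_shadowed_bicat B S"
  shows "(\<forall>D. is_sh_diagram B D \<and>
              (\<forall>p q. parallel_paths B D p q \<longrightarrow> same_cperm B (pcomp p) (pcomp q))
            \<longrightarrow> image_commutes B S D) \<and>
         (\<forall>xs D. aperiodic xs \<and> is_sh_diagram B D \<and> diagram_on B xs D
            \<longrightarrow> image_commutes B S D)"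
proof -
  interpret shadowed_bicat B S
    using assms unfolding is_shadowed_bicat_def by unfold_locales auto
  show ?thesis using image_commutes_if_same_cperm image_commutes_if_aperiodic by blast
qed

end
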